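(* $s_2s_1^3s_2^2s_1^2s_2^2\in u_1s_2u_1s_2s_1^3s_2u_1+u_1s_2^2s_1^3s_2s_1^{-1}s_2u_1+u_1u_2u_1u_2u_1+u_1^{\times}\omega^3\subset u_1^{\times}\omega^3+U''$.
   Context: Let $B_3=\langle s_1,s_2\mid s_1s_2s_1=s_2s_1s_2\rangle$, $R_5=\mathbb{Z}[a,b,c,d,e,e^{-1}]$, and let $H_5$ be the quotient of the group algebra $R_5B_3$ by the relations $s_i^5=as_i^4+bs_i^3+cs_i^2+ds_i+e$ for $i=1,2$; identify $s_i$ with their images. For $i=1,2$ let $u_i$ be the $R_5$-subalgebra of $H_5$ generated by $s_i$ and $u_i^\times$ its group of units. Set $\omega=s_2s_1^2s_2$. For $R_5$-submodules (or elements) $X_1,\dots,X_n$, $X_1\cdots X_n$ denotes the $R_5$-submodule spanned by products $x_1\cdots x_n$, $x_j\in X_j$; sums of submodules are as usual, and for a submodule $V$, $u_1^\times\omega^3+V$ denotes the set $\{x\omega^3+v: x\in u_1^\times, v\in V\}$. Define $U'=u_1u_2u_1+u_1\omega+u_1\omega^{-1}+u_1s_2^{-1}s_1^2s_2^{-1}u_1+u_1s_2s_1^{-2}s_2u_1+u_1s_2^2s_1^2s_2^2u_1+u_1s_2^{-2}s_1^{-2}s_2^{-2}u_1+u_1s_2s_1^{-2}s_2^2u_1+u_1s_2^{-1}s_1^2s_2^{-2}u_1+u_1s_2^{-1}s_1s_2^{-1}u_1+u_1s_2s_1^{-1}s_2u_1+u_1s_2^{-2}s_1^{-2}s_2^2u_1+u_1s_2^2s_1^2s_2^{-2}u_1+u_1s_2^2s_1^{-2}s_2^2u_1+u_1s_2^{-2}s_1^2s_2^{-2}u_1+u_1s_2^{-2}s_1s_2^{-1}u_1+u_1s_2^{-1}s_1s_2^{-2}u_1$;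 $U''=U'+u_1\omega^2+u_1\omega^{-2}+u_1s_2^{-2}s_1^2s_2^{-1}s_1s_2^{-1}u_1+u_1s_2^2s_1^{-2}s_2s_1^{-1}s_2u_1+u_1s_2s_1^{-2}s_2^2s_1^{-2}s_2^2u_1+u_1s_2^{-1}s_1^2s_2^{-2}s_1^2s_2^{-2}u_1$. *)

theory Defs
  imports Main
begin

text \<open>The coefficient ring: the subring generated by a,b,c,d,e and ei = e inverse
  (image of R5 = Z[a,b,c,d,e,e^-1] in the algebra).\<close>
inductive_set scalars :: "'a::ring_1 \<Rightarrow> 'a \<Rightarrow> 'a \<Rightarrow> 'a \<Rightarrow> 'a \<Rightarrow> 'a \<Rightarrow> 'a set"
  for a b c d e ei where
  gen: "x \<in> {a, b, c, d, e, ei} \<Longrightarrow> x \<in> scalars a b c d e ei"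
| one: "1 \<in> scalars a b c d e ei"
| add: "x \<in> scalars a b c d e ei \<Longrightarrow> y \<in> scalars a b c d e ei \<Longrightarrow> x + y \<in> scalars a b c d e ei"
| neg: "x \<in> scalars a b c d e ei \<Longrightarrow> - x \<in> scalars a b c d e ei"
| mult: "x \<in> scalars a b c d e ei \<Longrightarrow> y \<in> scalars a b c d e ei \<Longrightarrow> x * y \<in> scalars a b c d e ei"

inductive_set rspan :: "'a::ring_1 set \<Rightarrow> 'a set \<Rightarrow> 'a set" for R X where
  zero: "0 \<in> rspan R X"
| step: "r \<in> R \<Longrightarrow> x \<in> X \<Longrightarrow> v \<in> rspan R X \<Longrightarrow> r * x + v \<in> rspan R X"

definition mprod :: "'a::ring_1 set \<Rightarrow> 'a set \<Rightarrow> 'a set \<Rightarrow> 'a set" where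
  "mprod R X Y = rspan R {x * y | x y. x \<in> X \<and> y \<in> Y}"

fun msums :: "'a::ring_1 set list \<Rightarrow> 'a set" where
  "msums [] = {0}"
| "msums (X # Xs) = {x + y | x y. x \<in> X \<and> y \<in> msums Xs}"

definition ualg :: "'a::ring_1 set \<Rightarrow> 'a \<Rightarrow> 'a set" where
  "ualg R s = rspan R (range (\<lambda>k::nat. s ^ k))"

definition units_in :: "'a::ring_1 set \<Rightarrow> 'a set" where
  "units_in U = {x \<in> U. \<exists>y \<in> U. x * y = 1 \<and> y * x = 1}"

definition sandw :: "'a::ring_1 set \<Rightarrow> 'a set \<Rightarrow> 'a \<Rightarrow> 'a set" where
  "sandw R U w = mprod R (mprod R U {w}) U"

text \<open>U' ; here t1, t2 denote the inverses of s1, s2.\<close>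
definition Uprime :: "'a::ring_1 set \<Rightarrow> 'a \<Rightarrow> 'a \<Rightarrow> 'a \<Rightarrow> 'a \<Rightarrow> 'a set" where
  "Uprime R s1 s2 t1 t2 =
    (let u1 = ualg R s1; u2 = ualg R s2; w = s2 * s1^2 * s2; wi = t2 * t1^2 * t2 in
     msums [mprod R (mprod R u1 u2) u1,
            mprod R u1 {w},
            mprod R u1 {wi},
            sandw R u1 (t2 * s1^2 * t2),
            sandw R u1 (s2 * t1^2 * s2),
            sandw R u1 (s2^2 * s1^2 * s2^2),
            sandw R u1 (t2^2 * t1^2 * t2^2),
            sandw R u1 (s2 * t1^2 * s2^2),
            sandw R u1 (t2 * s1^2 * t2^2),
            sandw R u1 (t2 * s1 * t2),
            sandw R u1 (s2 * t1 * s2),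
            sandw R u1 (t2^2 * t1^2 * s2^2),
            sandw R u1 (s2^2 * s1^2 * t2^2),
            sandw R u1 (s2^2 * t1^2 * s2^2),
            sandw R u1 (t2^2 * s1^2 * t2^2),
            sandw R u1 (t2^2 * s1 * t2),
            sandw R u1 (t2 * s1 * t2^2)])"

definition Udprime :: "'a::ring_1 set \<Rightarrow> 'a \<Rightarrow> 'a \<Rightarrow> 'a \<Rightarrow> 'a \<Rightarrow> 'a set" where
  "Udprime R s1 s2 t1 t2 =
    (let u1 = ualg R s1; w = s2 * s1^2 * s2; wi = t2 * t1^2 * t2 in
     msums [Uprime R s1 s2 t1 t2,
            mprod R u1 {w^2},
            mprod R u1 {wi^2},
            sandw R u1 (t2^2 * s1^2 * t2 * s1 * t2),
            sandw R u1 (s2^2 * t1^2 * s2 * t1 * s2),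
            sandw R u1 (s2 * t1^2 * s2^2 * t1^2 * s2^2),
            sandw R u1 (t2 * s1^2 * t2^2 * s1^2 * t2^2)])"

end

theory Submission
  imports Defs
begin

(*
  All modules involved are bimodules over u1 = R[s1, s1^-1], so membership of a word
  s2^x s1^y s2^w z^k, where z = Delta^2 = (s1 s2 s1)^2 is central, is unaffected by powers of s1
  on either side. The braid relation lets s1^(+-1) slide through such a word and trades s1^(+-2)
  or s2^(+-2) for a change of k by one, while the quintic relation gives membership for all
  values of an exponent once it holds for five consecutive ones. Chains of these moves show that
  U'' contains every word with k = 0, every s2^m z^2 and s2^2 s1^2 s2^-3 z, and these words
  generate the first three summands of X. Finally s2 s1^3 s2^2 s1^2 s2^2 = s1^-1 s2 s1^-3 s2 z^2,
  and expanding s1^-3 by the quintic relation writes it as e^-1 s1^3 omega^3 plus words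
  s1^-1 s2 s1^j s2 z^2 (-2 <= j <= 1), which lie in every bimodule containing those words.
*)

section \<open>Integer powers of an invertible element\<close>

definition zpow :: "'a::ring_1 \<Rightarrow> 'a \<Rightarrow> int \<Rightarrow> 'a" where
  "zpow s t n = (if 0 \<le> n then s ^ nat n else t ^ nat (- n))"

lemma zpow_0 [simp]: "zpow s t 0 = 1"
  and zpow_1 [simp]: "zpow s t 1 = s"
  and zpow_minus_1 [simp]: "zpow s t (- 1) = t"
  and zpow_numeral [simp]: "zpow s t (numeral k) = s ^ numeral k"
  and zpow_neg_numeral [simp]: "zpow s t (- numeral k) = t ^ numeral k"
  and zpow_of_nat [simp]: "zpow s t (int n) = s ^ n"
  by (simp_all add: zpow_def)

context
  fixes s t :: "'a::ring_1"
  assumes s_t: "s * t = 1" and t_s: "t * s = 1"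
begin

lemma zpow_succ: "zpow s t (n + 1) = zpow s t n * s"
proof (cases "0 \<le> n")
  case True
  then have "nat (n + 1) = Suc (nat n)" by simp
  with True show ?thesis by (simp add: zpow_def power_commutes)
next
  case False
  then have "nat (- n) = Suc (nat (- (n + 1)))" by simp
  then have "zpow s t n * s = t ^ nat (- (n + 1)) * (t * s)"
    using False by (simp add: zpow_def power_Suc2 mult.assoc del: power_Suc)
  also have "\<dots> = zpow s t (n + 1)"
    using False t_s by (cases "n = - 1") (simp_all add: zpow_def)
  finally show ?thesis ..
qed

lemma zpow_pred: "zpow s t (n - 1) = zpow s t n * t"
  using zpow_succ[of "n - 1"] s_t by (simp add: mult.assoc)

lemma zpow_add: "zpow s t (m + n) = zpow s t m * zpow s t n"
proof (induction n rule: int_induct[where k = 0])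
  case (step1 i)
  then show ?case
    using zpow_succ[of "m + i"] zpow_succ[of i] by (simp add: add.assoc mult.assoc)
next
  case (step2 i)
  then show ?case
    using zpow_pred[of "m + i"] zpow_pred[of i] by (simp add: add_diff_eq mult.assoc)
qed simp

lemma zpow_inverse: "zpow s t n * zpow s t (- n) = 1" "zpow s t (- n) * zpow s t n = 1"
  using zpow_add[of n "- n"] zpow_add[of "- n" n] by simp_all

end

lemma zpow_intertwine:
  fixes s t :: "'a::ring_1"
  assumes s_t: "s * t = 1" and t_s: "t * s = 1"
    and s'_t': "s' * t' = 1" and t'_s': "t' * s' = 1" and x_s: "x * s = s' * x"
  shows "x * zpow s t n = zpow s' t' n * x"
proof -
  have x_t: "x * t = t' * x"
  proof -
    have "t' * x = t' * (x * s) * t" by (simp add: mult.assoc s_t)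
    also have "\<dots> = x * t" by (simp add: x_s mult.assoc[symmetric] t'_s')
    finally show ?thesis ..
  qed
  show ?thesis
  proof (induction n rule: int_induct[where k = 0])
    case (step1 i)
    have "x * zpow s t (i + 1) = (x * zpow s t i) * s"
      by (simp add: zpow_succ[OF s_t t_s] mult.assoc)
    also have "\<dots> = zpow s' t' i * (s' * x)" by (simp add: step1 mult.assoc x_s)
    finally show ?case by (simp add: zpow_succ[OF s'_t' t'_s'] mult.assoc)
  next
    case (step2 i)
    have "x * zpow s t (i - 1) = (x * zpow s t i) * t"
      by (simp add: zpow_pred[OF s_t t_s] mult.assoc)
    also have "\<dots> = zpow s' t' i * (t' * x)" by (simp add: step2 mult.assoc x_t)
    finally show ?case by (simp add: zpow_pred[OF s'_t' t'_s'] mult.assoc)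
  qed simp
qed

lemma zpow_commute:
  fixes s t :: "'a::ring_1"
  assumes "s * t = 1" "t * s = 1" "x * s = s * x"
  shows "x * zpow s t n = zpow s t n * x"
  using zpow_intertwine[OF assms(1,2) assms] .

lemma inverse_commute:
  fixes x y g :: "'a::ring_1"
  assumes "x * y = 1" "y * x = 1" "g * x = x * g"
  shows "g * y = y * g"
proof -
  have "g * y = (y * x) * g * y" by (simp add: assms(2))
  also have "\<dots> = y * (g * x) * y" by (simp add: assms(3) mult.assoc)
  also have "\<dots> = y * g" by (simp add: assms(1) mult.assoc)
  finally show ?thesis .
qed

section \<open>Submodules over central scalars\<close>

lemma scalars_commute:
  fixes a b c d e ei :: "'a::ring_1"
  assumes central: "\<And>x. a * x = x * a" "\<And>x. b * x = x * b" "\<And>x. c * x = x * c"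
      "\<And>x. d * x = x * d" "\<And>x. e * x = x * e"
    and e_ei: "e * ei = 1" and ei_e: "ei * e = 1"
    and r: "r \<in> scalars a b c d e ei"
  shows "r * x = x * r"
  using r
proof (induction arbitrary: x rule: scalars.induct)
  case (gen y)
  have "ei * x = x * ei" for x
    using inverse_commute[OF e_ei ei_e central(5)[symmetric]] by simp
  with gen central show ?case by auto
next
  case (mult y z)
  then show ?case by (metis mult.assoc)
qed (simp_all add: distrib_left distrib_right)

locale central_scalars =
  fixes R :: "'a::ring_1 set"
  assumes scalar_commute: "r \<in> R \<Longrightarrow> r * x = x * r"
    and scalar_mult: "r \<in> R \<Longrightarrow> r' \<in> R \<Longrightarrow> r * r' \<in> R"
    and minus_one_scalar: "- 1 \<in> R"
begin

definition submodule :: "'a set \<Rightarrow> bool" where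
  "submodule M \<longleftrightarrow> 0 \<in> M \<and> (\<forall>x\<in>M. \<forall>y\<in>M. x + y \<in> M) \<and> (\<forall>r\<in>R. \<forall>x\<in>M. r * x \<in> M)"

lemma
  assumes "submodule M"
  shows submodule_zero: "0 \<in> M"
    and submodule_add: "x \<in> M \<Longrightarrow> y \<in> M \<Longrightarrow> x + y \<in> M"
    and submodule_scale: "r \<in> R \<Longrightarrow> x \<in> M \<Longrightarrow> r * x \<in> M"
    and submodule_uminus: "x \<in> M \<Longrightarrow> - x \<in> M"
    and submodule_diff: "x \<in> M \<Longrightarrow> y \<in> M \<Longrightarrow> x - y \<in> M"
  using assms minus_one_scalar unfolding submodule_def
  by (auto simp: diff_conv_add_uminus simp del: add_uminus_conv_diff dest: bspec[of R _ "- 1"])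

lemma scalar_swap: "r \<in> R \<Longrightarrow> x * (r * y) = r * (x * y)"
  by (metis scalar_commute mult.assoc)

lemma rspan_submodule: "submodule (rspan R X)"
  unfolding submodule_def
proof (intro conjI ballI)
  fix x y assume "x \<in> rspan R X" "y \<in> rspan R X"
  then show "x + y \<in> rspan R X"
    by (induction rule: rspan.induct) (auto simp: add.assoc intro: rspan.step)
next
  fix r x assume r: "r \<in> R" and x: "x \<in> rspan R X"
  from x show "r * x \<in> rspan R X"
  proof (induction rule: rspan.induct)
    case (step r' x' v)
    have "r * (r' * x' + v) = (r * r') * x' + r * v" by (simp add: algebra_simps)
    then show ?case using step r by (auto intro: rspan.step scalar_mult)
  qed (simp add: rspan.zero)
qed (rule rspan.zero)

lemma one_scalar: "1 \<in> R"
  using scalar_mult[OF minus_one_scalar minus_one_scalar] by simp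

lemma rspan_base: "x \<in> X \<Longrightarrow> x \<in> rspan R X"
  using rspan.step[OF one_scalar _ rspan.zero] by simp

lemma rspan_sandwich:
  assumes M: "submodule M" and gen: "\<And>x. x \<in> X \<Longrightarrow> L * x * Q \<in> M" and y: "y \<in> rspan R X"
  shows "L * y * Q \<in> M"
  using y
proof (induction rule: rspan.induct)
  case (step r x v)
  have "L * (r * x + v) * Q = r * (L * x * Q) + L * v * Q"
    using scalar_swap[OF step(1), of L x] by (simp add: algebra_simps)
  then show ?case
    using step gen submodule_add[OF M] submodule_scale[OF M] by simp
qed (simp add: submodule_zero[OF M])

lemma mprod_mem: "x \<in> X \<Longrightarrow> y \<in> Y \<Longrightarrow> x * y \<in> mprod R X Y"
  unfolding mprod_def by (rule rspan_base) blast

lemma mprod_submodule: "submodule (mprod R X Y)"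
  unfolding mprod_def by (rule rspan_submodule)

lemma mprod_sandwich:
  assumes "submodule M" and "\<And>x y. x \<in> X \<Longrightarrow> y \<in> Y \<Longrightarrow> L * (x * y) * Q \<in> M"
    and "v \<in> mprod R X Y"
  shows "L * v * Q \<in> M"
  using rspan_sandwich[OF assms(1) _ assms(3)[unfolded mprod_def]] assms(2) by blast

lemma mprod_left_closed:
  assumes "\<And>x. x \<in> X \<Longrightarrow> g * x \<in> X" and "v \<in> mprod R X Y"
  shows "g * v \<in> mprod R X Y"
proof -
  have "g * v * 1 \<in> mprod R X Y"
    by (rule mprod_sandwich[OF mprod_submodule _ assms(2)]) (simp add: mult.assoc[symmetric] mprod_mem assms(1))
  then show ?thesis by simp
qed

lemma mprod_right_closed:
  assumes "\<And>y. y \<in> Y \<Longrightarrow> y * g \<in> Y" and "v \<in> mprod R X Y"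
  shows "v * g \<in> mprod R X Y"
proof -
  have "1 * v * g \<in> mprod R X Y"
    by (rule mprod_sandwich[OF mprod_submodule _ assms(2)]) (simp add: mult.assoc mprod_mem assms(1))
  then show ?thesis by simp
qed

lemma msums_ConsI: "x \<in> N \<Longrightarrow> y \<in> msums Ns \<Longrightarrow> x + y \<in> msums (N # Ns)"
  by auto

lemma msums_submodule: "(\<And>N. N \<in> set Ns \<Longrightarrow> submodule N) \<Longrightarrow> submodule (msums Ns)"
proof (induction Ns)
  case Nil
  then show ?case by (simp add: submodule_def)
next
  case (Cons N Ns)
  then have N: "submodule N" and Ns: "submodule (msums Ns)" by auto
  show ?case
    unfolding submodule_def
  proof (intro conjI ballI)
    show "0 \<in> msums (N # Ns)"
      using submodule_zero[OF N] submodule_zero[OF Ns] by force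
  next
    fix x y assume "x \<in> msums (N # Ns)" "y \<in> msums (N # Ns)"
    then obtain x1 x2 y1 y2 where xy: "x = x1 + x2" "y = y1 + y2" "x1 \<in> N" "y1 \<in> N"
      "x2 \<in> msums Ns" "y2 \<in> msums Ns" by auto
    then have "x + y = (x1 + y1) + (x2 + y2)" by (simp add: algebra_simps)
    moreover have "x1 + y1 \<in> N" "x2 + y2 \<in> msums Ns"
      using xy submodule_add[OF N] submodule_add[OF Ns] by auto
    ultimately show "x + y \<in> msums (N # Ns)" by (simp only: msums_ConsI)
  next
    fix r x assume r: "r \<in> R" and "x \<in> msums (N # Ns)"
    then obtain x1 x2 where x: "x = x1 + x2" "x1 \<in> N" "x2 \<in> msums Ns" by auto
    then have "r * x = r * x1 + r * x2" by (simp add: distrib_left)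
    moreover have "r * x1 \<in> N" "r * x2 \<in> msums Ns"
      using x submodule_scale[OF N r] submodule_scale[OF Ns r] by auto
    ultimately show "r * x \<in> msums (N # Ns)" by (simp only: msums_ConsI)
  qed
qed

lemma msums_mem:
  assumes "\<And>N. N \<in> set Ns \<Longrightarrow> submodule N" and "N \<in> set Ns" and "x \<in> N"
  shows "x \<in> msums Ns"
  using assms
proof (induction Ns)
  case (Cons N' Ns)
  have sub_N': "submodule N'" and sub_Ns: "\<And>K. K \<in> set Ns \<Longrightarrow> submodule K"
    using Cons.prems(1) by simp_all
  show ?case
  proof (cases "N = N'")
    case True
    have "x + 0 \<in> msums (N' # Ns)"
      by (rule msums_ConsI) (use Cons.prems(3) True submodule_zero[OF msums_submodule[OF sub_Ns]] in simp_all)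
    then show ?thesis by simp
  next
    case False
    then have "x \<in> msums Ns" using Cons.IH[OF sub_Ns] Cons.prems(2,3) by simp
    then have "0 + x \<in> msums (N' # Ns)" by (rule msums_ConsI[OF submodule_zero[OF sub_N']])
    then show ?thesis by simp
  qed
qed simp

lemma msums_sandwich:
  assumes "\<And>N x. N \<in> set Ns \<Longrightarrow> x \<in> N \<Longrightarrow> L * x * Q \<in> N" and "x \<in> msums Ns"
  shows "L * x * Q \<in> msums Ns"
  using assms
proof (induction Ns arbitrary: x)
  case (Cons N Ns)
  then obtain x1 x2 where x: "x = x1 + x2" "x1 \<in> N" "x2 \<in> msums Ns" by auto
  have "L * x * Q = L * x1 * Q + L * x2 * Q" using x by (simp add: algebra_simps)
  moreover have "L * x1 * Q \<in> N" using Cons.prems(1) x(2) by simp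
  moreover have "L * x2 * Q \<in> msums Ns"
    using x(3) by (rule Cons.IH[rotated]) (simp add: Cons.prems(1))
  ultimately show ?case by (simp only: msums_ConsI)
qed simp

lemma msums_subset:
  assumes "submodule M" and "\<And>N. N \<in> set Ns \<Longrightarrow> N \<subseteq> M"
  shows "msums Ns \<subseteq> M"
  using assms(2)
proof (induction Ns)
  case Nil
  then show ?case using submodule_zero[OF assms(1)] by simp
next
  case (Cons N Ns)
  have N: "N \<subseteq> M" using Cons.prems by simp
  have Ns: "msums Ns \<subseteq> M" using Cons.IH Cons.prems by simp
  show ?case
  proof
    fix x assume "x \<in> msums (N # Ns)"
    then obtain y z where "x = y + z" "y \<in> N" "z \<in> msums Ns" by auto
    then show "x \<in> M" using N Ns submodule_add[OF assms(1)] by blast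
  qed
qed

lemma ualg_submodule: "submodule (ualg R s)"
  unfolding ualg_def by (rule rspan_submodule)

lemma ualg_power: "s ^ k \<in> ualg R s"
  unfolding ualg_def by (rule rspan_base) simp

lemma ualg_sandwich:
  assumes "submodule M" and "\<And>k. L * s ^ k * Q \<in> M" and "p \<in> ualg R s"
  shows "L * p * Q \<in> M"
  using rspan_sandwich[OF assms(1) _ assms(3)[unfolded ualg_def]] assms(2) by blast

definition bimodule :: "'a \<Rightarrow> 'a \<Rightarrow> 'a set \<Rightarrow> bool" where
  "bimodule s t M \<longleftrightarrow> submodule M \<and> (\<forall>x\<in>M. s * x \<in> M \<and> x * s \<in> M \<and> t * x \<in> M \<and> x * t \<in> M)"

context
  fixes s t M
  assumes bimod: "bimodule s t M"
begin

lemma bimodule_submodule: "submodule M"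
  using bimod by (simp add: bimodule_def)

lemma bimodule_mult:
  assumes "x \<in> M"
  shows "s * x \<in> M" "x * s \<in> M" "t * x \<in> M" "x * t \<in> M"
  using bimod assms unfolding bimodule_def by blast+

lemma bimodule_power:
  assumes "x \<in> M"
  shows "s ^ k * x \<in> M" "x * s ^ k \<in> M" "t ^ k * x \<in> M" "x * t ^ k \<in> M"
proof -
  have "s ^ k * x \<in> M \<and> x * s ^ k \<in> M \<and> t ^ k * x \<in> M \<and> x * t ^ k \<in> M"
  proof (induction k)
    case (Suc k)
    then show ?case
      using bimodule_mult[of "s ^ k * x"] bimodule_mult[of "x * s ^ k"] bimodule_mult[of "t ^ k * x"]
        bimodule_mult[of "x * t ^ k"]
      by (simp add: mult.assoc power_commutes)
  qed (simp add: assms)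
  then show "s ^ k * x \<in> M" "x * s ^ k \<in> M" "t ^ k * x \<in> M" "x * t ^ k \<in> M" by auto
qed

lemma bimodule_zpow: "x \<in> M \<Longrightarrow> zpow s t n * x \<in> M" "x \<in> M \<Longrightarrow> x * zpow s t n \<in> M"
  using bimodule_power by (auto simp: zpow_def)

end

definition left_stable :: "'a \<Rightarrow> 'a \<Rightarrow> 'a set \<Rightarrow> bool" where
  "left_stable s t A \<longleftrightarrow> (\<forall>x\<in>A. s * x \<in> A \<and> t * x \<in> A)"

lemma bimodule_left_stable: "bimodule s t A \<Longrightarrow> left_stable s t A"
  by (simp add: bimodule_def left_stable_def)

lemma left_stable_mprod: "left_stable s t A \<Longrightarrow> left_stable s t (mprod R A B)"
  unfolding left_stable_def using mprod_left_closed by blast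

lemma bimodule_mprod:
  assumes "left_stable s t A" and "bimodule s t B"
  shows "bimodule s t (mprod R A B)"
  using assms mprod_submodule mprod_left_closed mprod_right_closed
  unfolding bimodule_def left_stable_def by meson

lemma bimodule_mprod_commuting:
  assumes A: "bimodule s t A" and w: "w * s = s * w" "w * t = t * w"
  shows "bimodule s t (mprod R A {w})"
proof -
  have "v * g \<in> mprod R A {w}" if v: "v \<in> mprod R A {w}" and g: "g \<in> {s, t}" for v g
  proof -
    have gen: "1 * (x * y) * g \<in> mprod R A {w}" if "x \<in> A" "y \<in> {w}" for x y
    proof -
      have "1 * (x * y) * g = (x * g) * w" using that g w by (auto simp: mult.assoc)
      moreover have "x * g \<in> A" using that(1) g A by (auto simp: bimodule_def)
      ultimately show ?thesis by (simp add: mprod_mem)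
    qed
    have "1 * v * g \<in> mprod R A {w}" by (rule mprod_sandwich[OF mprod_submodule gen v])
    then show ?thesis by simp
  qed
  moreover have "g * v \<in> mprod R A {w}" if "v \<in> mprod R A {w}" and "g \<in> {s, t}" for v g
    using mprod_left_closed[OF _ that(1)] that(2) A by (auto simp: bimodule_def)
  ultimately show ?thesis
    unfolding bimodule_def using mprod_submodule by blast
qed

lemma msums_bimodule:
  assumes "\<And>N. N \<in> set Ns \<Longrightarrow> bimodule s t N"
  shows "bimodule s t (msums Ns)"
  unfolding bimodule_def
proof (intro conjI ballI)
  show "submodule (msums Ns)"
    using assms bimodule_submodule by (blast intro: msums_submodule)
  have closed: "L * x * Q \<in> msums Ns"
    if "x \<in> msums Ns" and "\<And>N y. bimodule s t N \<Longrightarrow> y \<in> N \<Longrightarrow> L * y * Q \<in> N" for x L Q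
    using that assms by (blast intro: msums_sandwich)
  fix x assume "x \<in> msums Ns"
  then show "s * x \<in> msums Ns" "x * s \<in> msums Ns" "t * x \<in> msums Ns" "x * t \<in> msums Ns"
    using closed[of x s 1] closed[of x 1 s] closed[of x t 1] closed[of x 1 t]
    by (simp_all add: bimodule_def)
qed

end

section \<open>The algebra \<open>H\<^sub>5\<close>\<close>

locale braid_quintic =
  fixes a b c d e ei s1 s2 t1 t2 :: "'a::ring_1"
  assumes central: "\<And>x. a * x = x * a" "\<And>x. b * x = x * b" "\<And>x. c * x = x * c"
      "\<And>x. d * x = x * d" "\<And>x. e * x = x * e"
    and e_ei: "e * ei = 1" and ei_e: "ei * e = 1"
    and s1_t1: "s1 * t1 = 1" and t1_s1: "t1 * s1 = 1"
    and s2_t2: "s2 * t2 = 1" and t2_s2: "t2 * s2 = 1"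
    and braid: "s1 * s2 * s1 = s2 * s1 * s2"
    and quintic1: "s1 ^ 5 = a * s1 ^ 4 + b * s1 ^ 3 + c * s1 ^ 2 + d * s1 + e"
    and quintic2: "s2 ^ 5 = a * s2 ^ 4 + b * s2 ^ 3 + c * s2 ^ 2 + d * s2 + e"
begin

abbreviation R :: "'a set" where
  "R \<equiv> scalars a b c d e ei"

sublocale central_scalars "scalars a b c d e ei"
  by unfold_locales (auto intro: scalars_commute[OF central e_ei ei_e] scalars.intros)

lemma scalar_gens [simp]: "a \<in> R" "b \<in> R" "c \<in> R" "d \<in> R" "e \<in> R" "ei \<in> R"
  by (simp_all add: scalars.gen)

lemmas scalar_swaps = scalar_swap[OF scalar_gens(1)] scalar_swap[OF scalar_gens(2)]
  scalar_swap[OF scalar_gens(3)] scalar_swap[OF scalar_gens(4)] scalar_swap[OF scalar_gens(5)]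
  scalar_swap[OF scalar_gens(6)]

abbreviation "u1 \<equiv> ualg R s1"
abbreviation "u2 \<equiv> ualg R s2"
abbreviation "s1_pow \<equiv> zpow s1 t1"
abbreviation "s2_pow \<equiv> zpow s2 t2"

context
  fixes s t :: 'a
  assumes s_t: "s * t = 1" and t_s: "t * s = 1"
    and quintic: "s ^ 5 = a * s ^ 4 + b * s ^ 3 + c * s ^ 2 + d * s + e"
begin

lemma zpow_recurrence:
  "zpow s t (n + 5) = a * zpow s t (n + 4) + b * zpow s t (n + 3) + c * zpow s t (n + 2)
     + d * zpow s t (n + 1) + e * zpow s t n"
proof -
  have shift: "zpow s t (n + int k) = zpow s t n * s ^ k" for k
    using zpow_add[OF s_t t_s, of n "int k"] by simp
  show ?thesis
    using shift[of 5] shift[of 4] shift[of 3] shift[of 2] shift[of 1]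
    by (simp add: quintic distrib_left scalar_swaps central(5)[of "zpow s t n"])
qed

lemma zpow_sandwich_recurrence:
  "L * zpow s t (n + 5) * Q = a * (L * zpow s t (n + 4) * Q) + b * (L * zpow s t (n + 3) * Q)
     + c * (L * zpow s t (n + 2) * Q) + d * (L * zpow s t (n + 1) * Q) + e * (L * zpow s t n * Q)"
  by (simp add: zpow_recurrence distrib_left distrib_right scalar_swaps mult.assoc)

lemma ualg_inverse: "t \<in> ualg R s"
proof -
  let ?p = "ei * s ^ 4 - (ei * a) * s ^ 3 - (ei * b) * s ^ 2 - (ei * c) * s ^ 1 - (ei * d) * s ^ 0"
  have shift: "s * (r * s ^ k) = r * s ^ Suc k" if "r \<in> R" for r k
    using scalar_swap[OF that] by simp
  have "s * ?p = ei * s ^ 5 - (ei * a) * s ^ 4 - (ei * b) * s ^ 3 - (ei * c) * s ^ 2 - (ei * d) * s ^ 1"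
    by (simp only: right_diff_distrib shift scalar_mult scalar_gens) (simp add: power2_eq_square)
  also have "\<dots> = ei * (s ^ 5 - a * s ^ 4 - b * s ^ 3 - c * s ^ 2 - d * s)"
    by (simp add: right_diff_distrib mult.assoc)
  also have "s ^ 5 - a * s ^ 4 - b * s ^ 3 - c * s ^ 2 - d * s = e"
    using quintic by (simp add: algebra_simps)
  finally have "s * ?p = 1" by (simp add: ei_e)
  then have "t = (t * s) * ?p" by (simp add: mult.assoc)
  then have "t = ?p" by (simp add: t_s)
  moreover have "?p \<in> ualg R s"
    by (intro submodule_diff[OF ualg_submodule] submodule_scale[OF ualg_submodule] ualg_power
        scalar_mult scalar_gens)
  ultimately show ?thesis by simp
qed

lemma ualg_bimodule: "bimodule s t (ualg R s)"
proof -
  have gens: "s * s ^ k \<in> ualg R s" "s ^ k * s \<in> ualg R s" "t * s ^ k \<in> ualg R s"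
    "s ^ k * t \<in> ualg R s" for k
  proof -
    show "s * s ^ k \<in> ualg R s" "s ^ k * s \<in> ualg R s"
      using ualg_power[of s "Suc k"] by (simp_all add: power_commutes)
    show "t * s ^ k \<in> ualg R s"
      using ualg_inverse ualg_power[of s "k - 1"] t_s by (cases k) (simp_all add: mult.assoc[symmetric])
    show "s ^ k * t \<in> ualg R s"
      using ualg_inverse ualg_power[of s "k - 1"] s_t
      by (cases k) (simp_all add: mult.assoc power_Suc2 del: power_Suc)
  qed
  show ?thesis
    unfolding bimodule_def
  proof (intro conjI ballI ualg_submodule)
    fix x assume x: "x \<in> ualg R s"
    have "s * x * 1 \<in> ualg R s" "1 * x * s \<in> ualg R s" "t * x * 1 \<in> ualg R s" "1 * x * t \<in> ualg R s"
      by (rule ualg_sandwich[OF ualg_submodule _ x]; simp add: gens mult.assoc)+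
    then show "s * x \<in> ualg R s" "x * s \<in> ualg R s" "t * x \<in> ualg R s" "x * t \<in> ualg R s"
      by simp_all
  qed
qed

lemma zpow_in_ualg: "zpow s t n \<in> ualg R s"
  using bimodule_zpow(1)[OF ualg_bimodule, of 1 n] ualg_power[of s 0] by simp

end

lemma recurrence_extend:
  fixes f :: "int \<Rightarrow> 'a"
  assumes M: "submodule M"
    and rec: "\<And>i. f (i + 5) = a * f (i + 4) + b * f (i + 3) + c * f (i + 2) + d * f (i + 1) + e * f i"
    and base: "f n \<in> M" "f (n + 1) \<in> M" "f (n + 2) \<in> M" "f (n + 3) \<in> M" "f (n + 4) \<in> M"
  shows "f m \<in> M"
proof -
  let ?window = "\<lambda>i. f i \<in> M \<and> f (i + 1) \<in> M \<and> f (i + 2) \<in> M \<and> f (i + 3) \<in> M \<and> f (i + 4) \<in> M"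
  have "?window m"
  proof (induction m rule: int_induct[where k = n])
    case (step1 i)
    have "f (i + 5) \<in> M"
      unfolding rec using step1 by (intro submodule_add[OF M] submodule_scale[OF M]) auto
    moreover have "i + 1 + 1 = i + 2" "i + 1 + 2 = i + 3" "i + 1 + 3 = i + 4" "i + 1 + 4 = i + 5"
      by simp_all
    ultimately show ?case using step1 by (simp only:)
  next
    case (step2 i)
    have shift: "i - 1 + 5 = i + 4" "i - 1 + 4 = i + 3" "i - 1 + 3 = i + 2" "i - 1 + 2 = i + 1"
      "i - 1 + 1 = i" by simp_all
    have "e * f (i - 1) = f (i + 4) - a * f (i + 3) - b * f (i + 2) - c * f (i + 1) - d * f i"
      using rec[of "i - 1"] unfolding shift by (simp add: algebra_simps)
    then have "ei * (e * f (i - 1)) = ei * (f (i + 4) - a * f (i + 3) - b * f (i + 2) - c * f (i + 1) - d * f i)"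
      by simp
    then have "f (i - 1) = ei * (f (i + 4) - a * f (i + 3) - b * f (i + 2) - c * f (i + 1) - d * f i)"
      by (simp add: mult.assoc[symmetric] ei_e)
    then have "f (i - 1) \<in> M"
      using step2 by (simp only:) (intro submodule_scale[OF M] submodule_diff[OF M]; simp)
    then show ?case using step2 unfolding shift by (simp only:)
  qed (use base in simp)
  then show ?thesis by (rule conjunct1)
qed

lemma u1_bimodule: "bimodule s1 t1 u1"
  by (rule ualg_bimodule[OF s1_t1 t1_s1 quintic1])

lemma one_in_ualg: "1 \<in> ualg R s"
  using ualg_power[of s 0] by simp

lemma pow_in_ualg: "s1_pow n \<in> u1" "s2_pow n \<in> u2"
  using zpow_in_ualg[OF s1_t1 t1_s1 quintic1] zpow_in_ualg[OF s2_t2 t2_s2 quintic2] by auto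

lemma sandw_base: "g \<in> sandw R u1 g"
  unfolding sandw_def using mprod_mem[OF mprod_mem[OF ualg_power[of s1 0]] ualg_power[of s1 0]] by simp

subsection \<open>Braid relations and the central element \<open>\<Delta>\<^sup>2\<close>\<close>

lemma cancel_inverses [simp]: "s1 * (t1 * x) = x" "t1 * (s1 * x) = x" "s2 * (t2 * x) = x" "t2 * (s2 * x) = x"
  by (simp_all add: mult.assoc[symmetric] s1_t1 t1_s1 s2_t2 t2_s2)

lemma braid_assoc: "s1 * (s2 * (s1 * x)) = s2 * (s1 * (s2 * x))"
  using arg_cong[OF braid, of "\<lambda>y. y * x"] by (simp add: mult.assoc)

lemma s1_pow_add: "s1_pow (m + n) = s1_pow m * s1_pow n"
  by (rule zpow_add[OF s1_t1 t1_s1])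

lemma s2_pow_add: "s2_pow (m + n) = s2_pow m * s2_pow n"
  by (rule zpow_add[OF s2_t2 t2_s2])

lemma s1_pow_shift: "s1_pow n = s1_pow (n - 1) * s1" "s1_pow n = s1 * s1_pow (n - 1)"
    "s1_pow n = s1_pow (n + 1) * t1" "s1_pow n = t1 * s1_pow (n + 1)"
  using s1_pow_add[of "n - 1" 1] s1_pow_add[of 1 "n - 1"] s1_pow_add[of "n + 1" "- 1"]
    s1_pow_add[of "- 1" "n + 1"] by simp_all

lemma s2_pow_shift: "s2_pow n = s2_pow (n - 1) * s2" "s2_pow n = s2 * s2_pow (n - 1)"
    "s2_pow n = s2_pow (n + 1) * t2" "s2_pow n = t2 * s2_pow (n + 1)"
  using s2_pow_add[of "n - 1" 1] s2_pow_add[of 1 "n - 1"] s2_pow_add[of "n + 1" "- 1"]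
    s2_pow_add[of "- 1" "n + 1"] by simp_all

lemma s1s2_intertwine: "(s1 * s2) * s1_pow n = s2_pow n * (s1 * s2)"
  by (rule zpow_intertwine[OF s1_t1 t1_s1 s2_t2 t2_s2]) (use braid in \<open>simp add: mult.assoc\<close>)

lemma s2s1_intertwine: "(s2 * s1) * s2_pow n = s1_pow n * (s2 * s1)"
  by (rule zpow_intertwine[OF s2_t2 t2_s2 s1_t1 t1_s1]) (use braid in \<open>simp add: mult.assoc\<close>)

lemma t1t2_intertwine: "(t1 * t2) * s1_pow n = s2_pow n * (t1 * t2)"
proof (rule zpow_intertwine[OF s1_t1 t1_s1 s2_t2 t2_s2])
  have "t1 * (t2 * s1) = t1 * (t2 * (s1 * (s2 * (s1 * (t1 * t2)))))" by (simp add: s2_t2)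
  also have "\<dots> = s2 * (t1 * t2)" by (subst braid_assoc) simp
  finally show "t1 * t2 * s1 = s2 * (t1 * t2)" by (simp add: mult.assoc)
qed

lemma t2t1_intertwine: "(t2 * t1) * s2_pow n = s1_pow n * (t2 * t1)"
proof (rule zpow_intertwine[OF s2_t2 t2_s2 s1_t1 t1_s1])
  have "t2 * (t1 * s2) = t2 * (t1 * (s2 * (s1 * (s2 * (t2 * t1)))))" by (simp add: s1_t1)
  also have "\<dots> = s1 * (t2 * t1)" by (subst braid_assoc[symmetric]) simp
  finally show "t2 * t1 * s2 = s1 * (t2 * t1)" by (simp add: mult.assoc)
qed

definition delta :: 'a where
  "delta = s1 * s2 * s1"

definition z :: 'a where
  "z = delta * delta"

definition zi :: 'a where
  "zi = t1 * t2 * t1 * (t1 * t2 * t1)"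

abbreviation "z_pow \<equiv> zpow z zi"

lemma delta_s1: "delta * s1 = s2 * delta"
  unfolding delta_def by (simp add: mult.assoc braid_assoc)

lemma delta_s2: "delta * s2 = s1 * delta"
proof -
  have "delta * s2 = s1 * (s2 * s1 * s2)" by (simp add: delta_def mult.assoc)
  then show ?thesis by (simp add: delta_def braid)
qed

lemma z_s1: "z * s1 = s1 * z" and z_s2: "z * s2 = s2 * z"
  unfolding z_def
  by (simp_all add: mult.assoc delta_s1 delta_s2) (simp_all add: mult.assoc[symmetric] delta_s1 delta_s2)

lemma z_zi: "z * zi = 1" and zi_z: "zi * z = 1"
  unfolding z_def zi_def delta_def by (simp_all add: mult.assoc s1_t1 t1_s1)

lemma z_pow_commute:
  assumes gz: "g * z = z * g"
  shows "g * z_pow k = z_pow k * g"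
proof -
  have gzi: "g * zi = zi * g" by (rule inverse_commute[OF z_zi zi_z gz])
  show ?thesis
    using power_commuting_commutes[OF gz[symmetric], of "nat k"]
      power_commuting_commutes[OF gzi[symmetric], of "nat (- k)"]
    by (simp add: zpow_def)
qed

lemma t1_z: "t1 * z = z * t1"
proof -
  have "t1 * z = t1 * (z * s1) * t1" by (simp add: mult.assoc s1_t1)
  also have "\<dots> = z * t1" by (simp add: z_s1 mult.assoc[symmetric] t1_s1)
  finally show ?thesis .
qed

lemma t2_z: "t2 * z = z * t2"
proof -
  have "t2 * z = t2 * (z * s2) * t2" by (simp add: mult.assoc s2_t2)
  also have "\<dots> = z * t2" by (simp add: z_s2 mult.assoc[symmetric] t2_s2)
  finally show ?thesis .
qed

lemma z_s_pow_commute: "s1_pow n * z = z * s1_pow n" "s2_pow n * z = z * s2_pow n"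
  using zpow_commute[OF s1_t1 t1_s1, of z] zpow_commute[OF s2_t2 t2_s2, of z] z_s1 z_s2
  by simp_all

lemma z_push: "z * s1_pow n = s1_pow n * z" "z * s2_pow n = s2_pow n * z"
    "z * (s1_pow n * x) = s1_pow n * (z * x)" "z * (s2_pow n * x) = s2_pow n * (z * x)"
    "z * (s1 * x) = s1 * (z * x)" "z * (s2 * x) = s2 * (z * x)"
    "z * (t1 * x) = t1 * (z * x)" "z * (t2 * x) = t2 * (z * x)"
    "z * s1 = s1 * z" "z * s2 = s2 * z" "z * t1 = t1 * z" "z * t2 = t2 * z"
  by (simp_all add: z_s_pow_commute z_s1 z_s2 t1_z t2_z mult.assoc[symmetric])

lemma z_pow_s_pow_commute: "s1_pow n * z_pow k = z_pow k * s1_pow n" "s2_pow n * z_pow k = z_pow k * s2_pow n"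
  by (simp_all add: z_pow_commute z_s_pow_commute)

lemma s2_s1_s1_s2: "s2 * (s1 * (s1 * (s2 * x))) = t1 * (t1 * (z * x))"
proof -
  have "z * x = s1 * (s2 * (s1 * (s1 * (s2 * (s1 * x)))))" by (simp add: z_def delta_def mult.assoc)
  also have "\<dots> = s1 * (s1 * (s2 * (s1 * (s1 * (s2 * x)))))" by (simp add: braid_assoc)
  finally show ?thesis by simp
qed

lemma s1_s2_s2_s1: "s1 * (s2 * (s2 * (s1 * x))) = t2 * (t2 * (z * x))"
proof -
  have "z * x = s1 * (s2 * (s1 * (s1 * (s2 * (s1 * x)))))" by (simp add: z_def delta_def mult.assoc)
  also have "\<dots> = s2 * (s1 * (s2 * (s1 * (s2 * (s1 * x)))))" by (rule braid_assoc)
  also have "\<dots> = s2 * (s2 * (s1 * (s2 * (s2 * (s1 * x)))))"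
    by (simp only: braid_assoc[of "s2 * (s1 * x)"])
  finally show ?thesis by simp
qed

lemma s2_pow_s1_s2: "s2_pow n * (s1 * (s2 * x)) = s1 * (s2 * (s1_pow n * x))"
  using arg_cong[OF s1s2_intertwine[of n], of "\<lambda>y. y * x"] by (simp add: mult.assoc)

lemma s2_s2_s1_s2: "s2 * (s2 * (s1 * (s2 * x))) = s1 * (s2 * (s1 * (s1 * x)))"
  by (simp add: braid_assoc[symmetric])

lemma t1_s2: "t1 * s2 = s2 * (s1 * (t2 * t1))"
proof -
  have "t2 * (t1 * s2) = s1 * (t2 * t1)"
    using t2t1_intertwine[of 1] by (simp add: mult.assoc)
  then have "s2 * (t2 * (t1 * s2)) = s2 * (s1 * (t2 * t1))" by simp
  then show ?thesis by simp
qed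

subsection \<open>Words \<open>s\<^sub>2\<^sup>x s\<^sub>1\<^sup>y s\<^sub>2\<^sup>w z\<^sup>k\<close>\<close>

fun alternating :: "bool \<Rightarrow> int list \<Rightarrow> 'a" where
  "alternating _ [] = 1"
| "alternating from_s2 (n # ns) = (if from_s2 then s2_pow n else s1_pow n) * alternating (\<not> from_s2) ns"

definition word :: "int list \<Rightarrow> int \<Rightarrow> 'a" where
  "word ns k = alternating True ns * z_pow k"

lemma word_simps: "word [] k = z_pow k" "word [x] k = s2_pow x * z_pow k"
    "word [x, y, w] k = s2_pow x * s1_pow y * s2_pow w * z_pow k"
  by (simp_all add: word_def mult.assoc)

lemma word_zero_middle [simp]: "word [x, 0, w] k = word [x + w] k"
  by (simp add: word_simps s2_pow_add)

lemma word_zero_single [simp]: "word [0] k = word [] k"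
  by (simp add: word_simps)

end

locale u1_bimodule = braid_quintic +
  fixes M :: "'a set"
  assumes bimodule_M: "bimodule s1 t1 M"
begin

lemma submodule_M: "submodule M"
  using bimodule_M by (rule bimodule_submodule)

lemma s1_pow_mult_mem_iff: "s1_pow n * x \<in> M \<longleftrightarrow> x \<in> M"
proof
  assume "s1_pow n * x \<in> M"
  then have "s1_pow (- n) * (s1_pow n * x) \<in> M" by (rule bimodule_zpow[OF bimodule_M])
  then show "x \<in> M" by (simp add: mult.assoc[symmetric] s1_pow_add[symmetric])
qed (rule bimodule_zpow[OF bimodule_M])

lemma mult_s1_pow_mem_iff: "x * s1_pow n \<in> M \<longleftrightarrow> x \<in> M"
proof
  assume "x * s1_pow n \<in> M"
  then have "x * s1_pow n * s1_pow (- n) \<in> M" by (rule bimodule_zpow[OF bimodule_M])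
  then show "x \<in> M" by (simp add: mult.assoc s1_pow_add[symmetric])
qed (rule bimodule_zpow[OF bimodule_M])

lemma word_mem_cong:
  assumes eq: "alternating True xs = s1_pow m * (alternating True ys * z_pow j) * s1_pow n"
    and level: "k' = k + j"
  shows "word xs k \<in> M \<longleftrightarrow> word ys k' \<in> M"
proof -
  have "word xs k = s1_pow m * (alternating True ys * (z_pow j * (s1_pow n * z_pow k)))"
    unfolding word_def eq by (simp add: mult.assoc)
  also have "\<dots> = s1_pow m * word ys k' * s1_pow n"
    by (simp add: word_def level z_pow_s_pow_commute(1) zpow_add[OF z_zi zi_z] add.commute mult.assoc)
  finally show ?thesis by (simp add: s1_pow_mult_mem_iff mult_s1_pow_mem_iff)
qed

lemma word_zero_first [simp]: "word [0, y, w] k \<in> M \<longleftrightarrow> word [w] k \<in> M"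
  by (rule word_mem_cong[where m = y and j = 0 and n = 0]) simp_all

lemma word_zero_last [simp]: "word [x, y, 0] k \<in> M \<longleftrightarrow> word [x] k \<in> M"
  by (rule word_mem_cong[where m = 0 and j = 0 and n = y]) simp_all

lemma word_slide_s1_right: "word [x, 1, y] k \<in> M \<longleftrightarrow> word [x - 1, y, 1] k \<in> M"
proof (rule word_mem_cong[where m = 0 and j = 0 and n = 1])
  have "s2_pow x * s1 * s2_pow y = s2_pow (x - 1) * ((s2 * s1) * s2_pow y)"
    using s2_pow_shift(1)[of x] by (simp add: mult.assoc)
  also have "\<dots> = s2_pow (x - 1) * s1_pow y * (s2 * s1)"
    by (simp add: s2s1_intertwine mult.assoc[symmetric])
  finally show "alternating True [x, 1, y] = s1_pow 0 * (alternating True [x - 1, y, 1] * z_pow 0) * s1_pow 1"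
    by (simp add: mult.assoc)
qed simp

lemma word_slide_s1_left: "word [x, 1, y] k \<in> M \<longleftrightarrow> word [1, x, y - 1] k \<in> M"
proof (rule word_mem_cong[where m = 1 and j = 0 and n = 0])
  have "s2_pow x * s1 * s2_pow y = s2_pow x * (s1 * s2) * s2_pow (y - 1)"
    using s2_pow_shift(2)[of y] by (simp add: mult.assoc)
  also have "\<dots> = (s1 * s2) * s1_pow x * s2_pow (y - 1)"
    by (simp add: s1s2_intertwine)
  finally show "alternating True [x, 1, y] = s1_pow 1 * (alternating True [1, x, y - 1] * z_pow 0) * s1_pow 0"
    by (simp add: mult.assoc)
qed simp

lemma word_slide_t1_right: "word [x, - 1, y] k \<in> M \<longleftrightarrow> word [x + 1, y, - 1] k \<in> M"
proof (rule word_mem_cong[where m = 0 and j = 0 and n = "- 1"])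
  have "s2_pow x * t1 * s2_pow y = s2_pow (x + 1) * ((t2 * t1) * s2_pow y)"
    using s2_pow_shift(3)[of x] by (simp add: mult.assoc)
  also have "\<dots> = s2_pow (x + 1) * s1_pow y * (t2 * t1)"
    by (simp add: t2t1_intertwine mult.assoc[symmetric])
  finally show "alternating True [x, - 1, y] = s1_pow 0 * (alternating True [x + 1, y, - 1] * z_pow 0) * s1_pow (- 1)"
    by (simp add: mult.assoc)
qed simp

lemma word_slide_t1_left: "word [x, - 1, y] k \<in> M \<longleftrightarrow> word [- 1, x, y + 1] k \<in> M"
proof (rule word_mem_cong[where m = "- 1" and j = 0 and n = 0])
  have "s2_pow x * t1 * s2_pow y = s2_pow x * (t1 * t2) * s2_pow (y + 1)"
    using s2_pow_shift(4)[of y] by (simp add: mult.assoc)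
  also have "\<dots> = (t1 * t2) * s1_pow x * s2_pow (y + 1)"
    by (simp add: t1t2_intertwine)
  finally show "alternating True [x, - 1, y] = s1_pow (- 1) * (alternating True [- 1, x, y + 1] * z_pow 0) * s1_pow 0"
    by (simp add: mult.assoc)
qed simp

lemma word_s1_square: "word [x, 2, y] k \<in> M \<longleftrightarrow> word [x - 1, - 2, y - 1] (k + 1) \<in> M"
proof (rule word_mem_cong[where m = 0 and j = 1 and n = 0])
  have "s2_pow x * s1 ^ 2 * s2_pow y = s2_pow (x - 1) * (s2 * (s1 * (s1 * (s2 * s2_pow (y - 1)))))"
    using s2_pow_shift(1)[of x] s2_pow_shift(2)[of y] by (simp add: power2_eq_square mult.assoc)
  also have "\<dots> = s2_pow (x - 1) * t1 ^ 2 * s2_pow (y - 1) * z"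
    by (simp add: s2_s1_s1_s2 z_s_pow_commute power2_eq_square mult.assoc)
  finally show "alternating True [x, 2, y] = s1_pow 0 * (alternating True [x - 1, - 2, y - 1] * z_pow 1) * s1_pow 0"
    by (simp add: mult.assoc)
qed simp

lemma word_s2_square_right: "word [x, y, 2] k \<in> M \<longleftrightarrow> word [x, y - 1, - 2] (k + 1) \<in> M"
proof (rule word_mem_cong[where m = 0 and j = 1 and n = "- 1"])
  have "s1_pow y * s2 ^ 2 = s1_pow (y - 1) * (s1 * (s2 * (s2 * (s1 * t1))))"
    using s1_pow_shift(1)[of y] by (simp add: power2_eq_square mult.assoc s1_t1)
  also have "\<dots> = s1_pow (y - 1) * t2 ^ 2 * z * t1"
    by (simp add: s1_s2_s2_s1 power2_eq_square mult.assoc)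
  finally show "alternating True [x, y, 2] = s1_pow 0 * (alternating True [x, y - 1, - 2] * z_pow 1) * s1_pow (- 1)"
    by (simp add: mult.assoc)
qed simp

lemma word_s2_square_left: "word [2, y, w] k \<in> M \<longleftrightarrow> word [- 2, y - 1, w] (k + 1) \<in> M"
proof (rule word_mem_cong[where m = "- 1" and j = 1 and n = 0])
  have "s2 ^ 2 * s1_pow y * s2_pow w = t1 * (s1 * (s2 * (s2 * (s1 * (s1_pow (y - 1) * s2_pow w)))))"
    using s1_pow_shift(2)[of y] by (simp add: power2_eq_square mult.assoc)
  also have "\<dots> = t1 * t2 ^ 2 * s1_pow (y - 1) * s2_pow w * z"
    by (simp add: s1_s2_s2_s1 z_push power2_eq_square mult.assoc)
  finally show "alternating True [2, y, w] = s1_pow (- 1) * (alternating True [- 2, y - 1, w] * z_pow 1) * s1_pow 0"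
    by (simp add: mult.assoc)
qed simp

lemma word_collapse [simp]:
  "word [1, 1, w] k \<in> M \<longleftrightarrow> word [1] k \<in> M"
  "word [x, 1, 1] k \<in> M \<longleftrightarrow> word [1] k \<in> M"
  "word [- 1, - 1, w] k \<in> M \<longleftrightarrow> word [- 1] k \<in> M"
  "word [x, - 1, - 1] k \<in> M \<longleftrightarrow> word [- 1] k \<in> M"
  "w \<noteq> 0 \<Longrightarrow> word [1, 2, w] k \<in> M \<longleftrightarrow> word [w - 1] (k + 1) \<in> M"
  "x \<noteq> 0 \<Longrightarrow> word [x, 2, 1] k \<in> M \<longleftrightarrow> word [x - 1] (k + 1) \<in> M"
  "x \<notin> {0, 1} \<Longrightarrow> word [x, 1, 2] k \<in> M \<longleftrightarrow> word [x - 2] (k + 1) \<in> M"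
  "w \<notin> {0, 1} \<Longrightarrow> word [2, 1, w] k \<in> M \<longleftrightarrow> word [w - 2] (k + 1) \<in> M"
  "w \<noteq> 0 \<Longrightarrow> word [- 1, - 2, w] k \<in> M \<longleftrightarrow> word [w + 1] (k - 1) \<in> M"
  "x \<noteq> 0 \<Longrightarrow> word [x, - 2, - 1] k \<in> M \<longleftrightarrow> word [x + 1] (k - 1) \<in> M"
  "x \<notin> {0, - 1} \<Longrightarrow> word [x, - 1, - 2] k \<in> M \<longleftrightarrow> word [x + 2] (k - 1) \<in> M"
  "w \<notin> {0, - 1} \<Longrightarrow> word [- 2, - 1, w] k \<in> M \<longleftrightarrow> word [w + 2] (k - 1) \<in> M"
  using word_slide_s1_right[of 1 w k] word_slide_s1_left[of x 1 k]
    word_slide_t1_right[of "- 1" w k] word_slide_t1_left[of x "- 1" k]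
    word_s1_square[of 1 w k] word_s1_square[of x 1 k]
    word_s2_square_right[of x 1 k] word_s2_square_left[of 1 w k]
    word_s1_square[of 0 "w + 1" "k - 1"] word_s1_square[of "x + 1" 0 "k - 1"]
    word_s2_square_right[of x 0 "k - 1"] word_s2_square_left[of 0 w "k - 1"]
  by (simp_all add: add.commute)

context
  fixes k :: int
begin

lemma word_extend_first:
  assumes "word [n, y, w] k \<in> M" "word [n + 1, y, w] k \<in> M" "word [n + 2, y, w] k \<in> M"
    "word [n + 3, y, w] k \<in> M" "word [n + 4, y, w] k \<in> M"
  shows "word [m, y, w] k \<in> M"
proof -
  have "1 * s2_pow m * (s1_pow y * s2_pow w * z_pow k) \<in> M"
    by (rule recurrence_extend[OF submodule_M zpow_sandwich_recurrence[OF s2_t2 t2_s2 quintic2]])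
      (use assms in \<open>simp_all add: word_simps mult.assoc\<close>)
  then show ?thesis by (simp add: word_simps mult.assoc)
qed

lemma word_extend_middle:
  assumes "word [x, n, w] k \<in> M" "word [x, n + 1, w] k \<in> M" "word [x, n + 2, w] k \<in> M"
    "word [x, n + 3, w] k \<in> M" "word [x, n + 4, w] k \<in> M"
  shows "word [x, m, w] k \<in> M"
proof -
  have "s2_pow x * s1_pow m * (s2_pow w * z_pow k) \<in> M"
    by (rule recurrence_extend[OF submodule_M zpow_sandwich_recurrence[OF s1_t1 t1_s1 quintic1]])
      (use assms in \<open>simp_all add: word_simps mult.assoc\<close>)
  then show ?thesis by (simp add: word_simps mult.assoc)
qed

lemma word_extend_last:
  assumes "word [x, y, n] k \<in> M" "word [x, y, n + 1] k \<in> M" "word [x, y, n + 2] k \<in> M"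
    "word [x, y, n + 3] k \<in> M" "word [x, y, n + 4] k \<in> M"
  shows "word [x, y, m] k \<in> M"
proof -
  have "s2_pow x * s1_pow y * s2_pow m * z_pow k \<in> M"
    by (rule recurrence_extend[OF submodule_M zpow_sandwich_recurrence[OF s2_t2 t2_s2 quintic2]])
      (use assms in \<open>simp_all add: word_simps\<close>)
  then show ?thesis by (simp add: word_simps)
qed

lemma word_extend_single:
  assumes "word [n] k \<in> M" "word [n + 1] k \<in> M" "word [n + 2] k \<in> M"
    "word [n + 3] k \<in> M" "word [n + 4] k \<in> M"
  shows "word [m] k \<in> M"
proof -
  have "1 * s2_pow m * z_pow k \<in> M"
    by (rule recurrence_extend[OF submodule_M zpow_sandwich_recurrence[OF s2_t2 t2_s2 quintic2]])
      (use assms in \<open>simp_all add: word_simps\<close>)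
  then show ?thesis by (simp add: word_simps)
qed

lemma word_box_extend:
  assumes box: "\<And>x y w. x \<in> {- 2..2} \<Longrightarrow> y \<in> {- 2..2} \<Longrightarrow> w \<in> {- 2..2} \<Longrightarrow>
    word [x, y, w] k \<in> M"
  shows "word [x, y, w] k \<in> M"
proof -
  note [simp del] = word_zero_first word_zero_middle word_zero_last word_collapse
  have rows: "word [x', y', w'] k \<in> M" if "y' \<in> {- 2..2}" "w' \<in> {- 2..2}" for x' y' w'
    by (rule word_extend_first[of "- 2"]) (use box that in simp_all)
  have planes: "word [x', y', w'] k \<in> M" if "w' \<in> {- 2..2}" for x' y' w'
    by (rule word_extend_middle[of _ "- 2"]) (use rows that in simp_all)
  show ?thesis
    by (rule word_extend_last[of _ _ "- 2"]) (use planes in simp_all)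
qed

end

end

context braid_quintic
begin

definition has_key_words :: "'a set \<Rightarrow> bool" where
  "has_key_words M \<longleftrightarrow>
     (\<forall>x y w. word [x, y, w] 0 \<in> M) \<and> (\<forall>m. word [m] 2 \<in> M) \<and> word [2, 2, - 3] 1 \<in> M"

end

context u1_bimodule
begin

lemma key_words_level2:
  assumes "has_key_words M"
  shows "word [1, - 1, 1] 2 \<in> M" "word [1, - 2, 1] 2 \<in> M"
proof -
  have level0: "\<And>x y w. word [x, y, w] 0 \<in> M" and [simp]: "\<And>m. word [m] 2 \<in> M"
    and [simp]: "word [2, 2, - 3] 1 \<in> M"
    using assms by (simp_all add: has_key_words_def)
  have [simp]: "word [m] 0 \<in> M" "word [] 0 \<in> M" "word [] 2 \<in> M" for m
    using level0[of m 0 0] level0[of 0 0 0] \<open>\<And>m. word [m] 2 \<in> M\<close>[of 0] by simp_all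
  have [simp]: "word [2, -2, 1] 1 \<in> M" using word_s1_square[of 3 2 0] level0[of 3 2 2] by simp
  have [simp]: "word [-2, -3, 1] 2 \<in> M" using word_s2_square_left[of "-2" 1 1] by simp
  have [simp]: "word [-1, 1, -3] 2 \<in> M" using word_slide_s1_right[of "-1" "-3" 2] by simp
  have [simp]: "word [1, -1, -4] 2 \<in> M" using word_slide_t1_left[of 1 "-4" 2] by simp
  have [simp]: "word [1, 3, -2] 1 \<in> M" using word_s2_square_right[of 1 4 0] level0[of 1 4 2] by simp
  have [simp]: "word [3, 1, -1] 1 \<in> M" using word_slide_s1_left[of 3 "-1" 1] by simp
  have [simp]: "word [2, -1, 1] 1 \<in> M" using word_slide_t1_right[of 2 1 1] by simp
  have [simp]: "word [-1, 2, 2] 1 \<in> M" using word_slide_t1_left[of 2 1 1] by simp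
  have [simp]: "word [-1, 1, -2] 2 \<in> M" using word_s2_square_right[of "-1" 2 1] by simp
  have [simp]: "word [1, -1, -3] 2 \<in> M" using word_slide_t1_left[of 1 "-3" 2] by simp
  have [simp]: "word [1, -1, 1] 2 \<in> M" using word_extend_last[of 1 "-1" "-4" 2 1] level0[of 1 2 4] by simp
  have [simp]: "word [1, -2, -4] 2 \<in> M" using word_s1_square[of 2 "-3" 1] by simp
  have [simp]: "word [2, 2, -2] 1 \<in> M" using word_s2_square_right[of 2 3 0] level0[of 2 3 2] by simp
  have [simp]: "word [1, -2, -3] 2 \<in> M" using word_s1_square[of 2 "-2" 1] by simp
  have [simp]: "word [-2, 3, 1] 1 \<in> M" using word_s2_square_left[of 4 1 0] level0[of 2 4 1] by simp
  have [simp]: "word [-1, 1, 3] 1 \<in> M" using word_slide_s1_right[of "-1" 3 1] by simp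
  have [simp]: "word [1, -1, 2] 1 \<in> M" using word_slide_t1_left[of 1 2 1] by simp
  have [simp]: "word [1, -2, -2] 2 \<in> M" using word_s2_square_right[of 1 "-1" 1] by simp
  have [simp]: "word [1, -2, 1] 2 \<in> M" using word_extend_last[of 1 "-2" "-4" 2 1] level0[of 1 2 3] by simp
  show "word [1, - 1, 1] 2 \<in> M" "word [1, - 2, 1] 2 \<in> M" by simp_all
qed

end

text \<open>Words that lie in \<open>U''\<close> by inspection of its summands.\<close>

locale generator_words = u1_bimodule +
  assumes singles [simp]: "\<And>x. word [x] 0 \<in> M"
    and centre_powers [simp]: "word [] 0 \<in> M" "word [] 1 \<in> M" "word [] (- 1) \<in> M" "word [] 2 \<in> M"
    and sandwiched [simp]: "word [- 1, 2, - 1] 0 \<in> M" "word [1, - 2, 1] 0 \<in> M" "word [2, 2, 2] 0 \<in> M"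
      "word [- 2, - 2, - 2] 0 \<in> M" "word [1, - 2, 2] 0 \<in> M" "word [- 1, 2, - 2] 0 \<in> M"
      "word [- 1, 1, - 1] 0 \<in> M" "word [1, - 1, 1] 0 \<in> M" "word [- 2, - 2, 2] 0 \<in> M"
      "word [2, 2, - 2] 0 \<in> M" "word [2, - 2, 2] 0 \<in> M" "word [- 2, 2, - 2] 0 \<in> M"
      "word [- 2, 1, - 1] 0 \<in> M" "word [- 1, 1, - 2] 0 \<in> M"
    and top_word [simp]: "word [2, - 3, - 3] 1 \<in> M"
begin

lemma level0_box:
  assumes "x \<in> {- 2..2}" "y \<in> {- 2..2}" "w \<in> {- 2..2}"
  shows "word [x, y, w] 0 \<in> M"
proof -
  have [simp]: "word [1] (-1) \<in> M" using word_s1_square[of 0 1 "-1"] by simp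
  have [simp]: "word [2] (-1) \<in> M" using word_s2_square_right[of 0 0 "-1"] by simp
  have [simp]: "word [3] (-1) \<in> M" using word_slide_t1_left[of 1 "-2" 0] by simp
  have [simp]: "word [4] (-1) \<in> M" using word_slide_t1_left[of 2 "-2" 0] by simp
  have [simp]: "word [-1] (-1) \<in> M" using word_extend_first[of 0 0 0 "-1" "-1"] by simp
  have [simp]: "word [-2, -2, 1] 0 \<in> M" using word_slide_s1_right[of "-1" "-2" 0] by simp
  have [simp]: "word [-4] 1 \<in> M" using word_slide_s1_right[of 2 "-2" 0] by simp
  have [simp]: "word [-2, 1, 3] 0 \<in> M" using word_slide_s1_left[of "-2" 3 0] by simp
  have [simp]: "word [-2, 1, -2] 0 \<in> M" using word_extend_last[of "-2" 1 "-1" 0 "-2"] by simp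
  have [simp]: "word [-2] 1 \<in> M" using word_s2_square_right[of 0 0 0] by simp
  have [simp]: "word [1, -1, -3] 0 \<in> M" using word_slide_t1_left[of 1 "-3" 0] by simp
  have [simp]: "word [2, -3, -1] 0 \<in> M" using word_slide_t1_right[of 1 "-3" 0] by simp
  have [simp]: "word [-3] 1 \<in> M" using word_slide_t1_right[of 1 1 0] by simp
  have [simp]: "word [2, 2, -1] 0 \<in> M" using word_extend_middle[of 2 "-3" "-1" 0 2] by simp
  have [simp]: "word [2, -1, -3] 0 \<in> M" using word_slide_t1_left[of 2 "-3" 0] by simp
  have [simp]: "word [3, -3, -1] 0 \<in> M" using word_slide_t1_right[of 2 "-3" 0] by simp
  have [simp]: "word [3, 1, -1] 0 \<in> M" using word_extend_first[of "-2" 1 "-1" 0 3] by simp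
  have [simp]: "word [3, 2, -1] 0 \<in> M" using word_extend_middle[of 3 "-3" "-1" 0 2] by simp
  have [simp]: "word [-2, 2, -1] 0 \<in> M" using word_extend_first[of "-1" 2 "-1" 0 "-2"] by simp
  have [simp]: "word [-2, 1, -2] 1 \<in> M" using word_s2_square_left[of 2 "-2" 0] by simp
  have [simp]: "word [-2, 2, 2] 0 \<in> M" using word_s2_square_right[of "-2" 2 0] by simp
  have [simp]: "word [-3, -1, 1] 0 \<in> M" using word_slide_s1_right[of "-2" "-1" 0] by simp
  have [simp]: "word [-1, -3, 2] 0 \<in> M" using word_slide_t1_left[of "-3" 1 0] by simp
  have [simp]: "word [-1, 2, 2] 0 \<in> M" using word_extend_middle[of "-1" "-3" 2 0 2] by simp
  have [simp]: "word [1, -2, -2] 0 \<in> M" using word_slide_s1_left[of "-2" "-1" 0] by simp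
  have [simp]: "word [1, -1, 2] 0 \<in> M" using word_extend_last[of 1 "-1" "-3" 0 2] by simp
  have [simp]: "word [-1] 1 \<in> M" using word_s1_square[of 0 1 0] by simp
  have [simp]: "word [1] 1 \<in> M" using word_extend_first[of "-4" 0 0 1 1] by simp
  have [simp]: "word [2, -1, 2] (-1) \<in> M" using word_s2_square_left[of "-1" 2 "-1"] by simp
  have [simp]: "word [2, -2, -2] 0 \<in> M" using word_s2_square_right[of 2 "-1" "-1"] by simp
  have [simp]: "word [-3, 3, 1] 0 \<in> M" using word_slide_s1_right[of "-2" 3 0] by simp
  have [simp]: "word [-3, -2, 1] 0 \<in> M" using word_extend_middle[of "-3" "-1" 1 0 "-2"] by simp
  have [simp]: "word [2, -2, 1] 0 \<in> M" using word_extend_first[of "-3" "-2" 1 0 2] by simp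
  have [simp]: "word [2, -1, 1] 0 \<in> M" using word_extend_first[of "-3" "-1" 1 0 2] by simp
  have [simp]: "word [2, -1, 2] 0 \<in> M" using word_extend_last[of 2 "-1" "-3" 0 2] by simp
  have "x \<in> {- 2, - 1, 0, 1, 2}" "y \<in> {- 2, - 1, 0, 1, 2}" "w \<in> {- 2, - 1, 0, 1, 2}"
    using assms by auto
  then show ?thesis by auto
qed

lemma level0_words: "word [x, y, w] 0 \<in> M"
  by (rule word_box_extend) (rule level0_box)

lemma has_key_words_M: "has_key_words M"
proof -
  have [simp]: "word [2, -2, -3] 1 \<in> M" using word_s1_square[of 3 "-2" 0] level0_words[of 3 2 "-2"] by simp
  have [simp]: "word [-1, 2, -2] 1 \<in> M" using word_s2_square_right[of "-1" 3 0] level0_words[of "-1" 3 2] by simp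
  have [simp]: "word [2, -1, -3] 1 \<in> M" using word_slide_t1_left[of 2 "-3" 1] by simp
  have [simp]: "word [-1] 1 \<in> M" using word_s1_square[of 0 1 0] by simp
  have [simp]: "word [-4] 2 \<in> M" using word_s2_square_right[of 2 2 0] level0_words[of 2 2 2] by simp
  have [simp]: "word [-3] 2 \<in> M" using word_s2_square_right[of 1 3 0] level0_words[of 1 3 2] by simp
  have [simp]: "word [-2] 2 \<in> M" using word_s2_square_right[of 0 0 1] level0_words[of 1 2 3] by simp
  have [simp]: "word [-1] 2 \<in> M" using word_s1_square[of 0 1 1] level0_words[of 1 2 2] by simp
  have [simp]: "word [-5] 2 \<in> M" using word_extend_first[of "-4" 0 0 2 "-5"] by simp
  have [simp]: "word [2, 2, -3] 1 \<in> M" using word_extend_middle[of 2 "-3" "-3" 1 2] by simp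
  have [simp]: "word [1] 2 \<in> M" using word_extend_first[of "-4" 0 0 2 1] by simp
  have [simp]: "word [2] 2 \<in> M" using word_extend_first[of "-4" 0 0 2 2] by simp
  have "word [m] 2 \<in> M" for m
    by (rule word_extend_single[of "- 2"]) simp_all
  then show ?thesis
    unfolding has_key_words_def using level0_words by simp
qed

end

section \<open>The element and the summands of \<open>X\<close>\<close>

context braid_quintic
begin

definition omega :: 'a where
  "omega = s2 * s1 ^ 2 * s2"

lemma omega_eq: "omega = t1 ^ 2 * z"
  using s2_s1_s1_s2[of 1] by (simp add: omega_def power2_eq_square mult.assoc)

lemma omega_commute: "omega * s1 = s1 * omega" "omega * t1 = t1 * omega"
  by (simp_all add: omega_eq power2_eq_square mult.assoc z_s1 t1_z[symmetric])

lemma omega_cube: "t1 * word [1, 2, 1] 2 = s1 ^ 3 * omega ^ 3"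
  by (simp add: word_simps omega_eq s2_s1_s1_s2[of "z * z"] power2_eq_square power3_eq_cube
      z_push mult.assoc)

lemma X1_generator_word: "s2 * s1_pow j * (s2 * s1 ^ 3 * s2) = t1 * word [j - 3] 2 * t1 ^ 2"
proof -
  have "s2 * s1_pow j * (s2 * s1 ^ 3 * s2) = s2 * (s2 * (s1 * (s2_pow j * (s1 * (s1 * s2)))))"
    using s2s1_intertwine[of j] by (simp add: power3_eq_cube mult.assoc[symmetric])
  also have "\<dots> = s2 * (s2 * (s1 * (s2 * (s2_pow (j - 1) * (s1 * (s1 * s2))))))"
    using s2_pow_shift(2)[of j] by (simp add: mult.assoc)
  also have "\<dots> = s1 * (s2 * (s1 * (s1 * (s2_pow (j - 1) * (s1 * (s1 * s2))))))"
    by (rule s2_s2_s1_s2)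
  also have "\<dots> = t1 * (z * (s2_pow (j - 2) * (s1 * (s1 * s2))))"
    using s2_pow_shift(2)[of "j - 1"] by (simp add: s2_s1_s1_s2 mult.assoc)
  also have "\<dots> = t1 * (z * (s2_pow (j - 3) * (t1 * (t1 * z))))"
    using s2_pow_shift(1)[of "j - 2"] s2_s1_s1_s2[of 1] by (simp add: mult.assoc)
  also have "\<dots> = t1 * word [j - 3] 2 * t1 ^ 2"
    by (simp add: word_simps z_push power2_eq_square mult.assoc)
  finally show ?thesis .
qed

lemma X2_generator_word: "s2 ^ 2 * s1 ^ 3 * s2 * t1 * s2 * s1 = word [2, 2, - 3] 1"
proof -
  have "s2 ^ 2 * s1 ^ 3 * s2 * t1 * s2 = s2 * (s2 * (s1 * (s1 * (s1 * (s2 * (s2 * (s1 * (t2 * t1))))))))"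
    by (simp add: t1_s2 power2_eq_square power3_eq_cube mult.assoc)
  also have "\<dots> = s2 ^ 2 * s1 ^ 2 * t2 ^ 3 * t1 * z"
    by (simp add: s1_s2_s2_s1 z_push power2_eq_square power3_eq_cube mult.assoc)
  finally show ?thesis
    by (simp add: word_simps power2_eq_square mult.assoc z_push)
qed

lemma element_word: "s2 * s1 ^ 3 * s2 ^ 2 * s1 ^ 2 * s2 ^ 2 = t1 * word [1, - 3, 1] 2"
proof -
  have "s2 * s1 ^ 3 * s2 ^ 2 * s1 ^ 2 * s2 ^ 2
      = s2 * (s1 * (s1 * (s1 * (s2 * (s2 * (s1 * (s1 * (s2 * s2))))))))"
    by (simp add: power3_eq_cube power2_eq_square mult.assoc)
  also have "\<dots> = s2 * (s1 * (s1 * (t2 * (t2 * (z * (s1 * (s2 * s2)))))))"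
    by (simp only: s1_s2_s2_s1)
  also have "\<dots> = s2 * (s1 * (s1 * (s2 * (t2 * (t2 * (t2 * (s1 * (s2 * (s2 * z)))))))))"
    by (simp add: z_push)
  also have "\<dots> = t1 * (t1 * (z * (t2 * (t2 * (t2 * (s1 * (s2 * (s2 * z))))))))"
    by (simp only: s2_s1_s1_s2)
  also have "\<dots> = t1 * (t1 * (s2_pow (- 3) * (s1 * (s2 * (s2 * (z * z))))))"
    by (simp add: z_push power3_eq_cube mult.assoc)
  also have "\<dots> = t1 * (s2 * (s1_pow (- 3) * (s2 * (z * z))))"
    by (simp only: s2_pow_s1_s2 cancel_inverses)
  finally show ?thesis
    by (simp add: word_simps power2_eq_square mult.assoc)
qed

lemma word_middle_recurrence:
  "word [x, n + 5, w] k = a * word [x, n + 4, w] k + b * word [x, n + 3, w] k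
     + c * word [x, n + 2, w] k + d * word [x, n + 1, w] k + e * word [x, n, w] k"
  using zpow_sandwich_recurrence[OF s1_t1 t1_s1 quintic1, of "s2_pow x" n "s2_pow w * z_pow k"]
  by (simp add: word_simps mult.assoc)

definition X1 :: "'a set" where
  "X1 = mprod R (mprod R (mprod R (mprod R u1 {s2}) u1) {s2 * s1 ^ 3 * s2}) u1"

definition X2 :: "'a set" where
  "X2 = sandw R u1 (s2 ^ 2 * s1 ^ 3 * s2 * t1 * s2)"

definition X3 :: "'a set" where
  "X3 = mprod R (mprod R (mprod R (mprod R u1 u2) u1) u2) u1"

definition W :: "'a set" where
  "W = {x * omega ^ 3 | x. x \<in> units_in u1}"

lemma summands_bimodule: "bimodule s1 t1 X1" "bimodule s1 t1 X2" "bimodule s1 t1 X3"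
  unfolding X1_def X2_def X3_def sandw_def
  by (intro bimodule_mprod left_stable_mprod bimodule_left_stable u1_bimodule)+

end

context u1_bimodule
begin

lemma element_decomposition:
  assumes "has_key_words M"
  shows "s2 * s1 ^ 3 * s2 ^ 2 * s1 ^ 2 * s2 ^ 2 - ei * s1 ^ 3 * omega ^ 3 \<in> M"
proof -
  let ?w = "\<lambda>j. t1 * word [1, j, 1] 2"
  have "word [1, 1, 1] 2 \<in> M" "word [1, 0, 1] 2 \<in> M" "word [1, - 1, 1] 2 \<in> M" "word [1, - 2, 1] 2 \<in> M"
    using assms key_words_level2[OF assms] by (simp_all add: has_key_words_def)
  then have w_in: "?w 1 \<in> M" "?w 0 \<in> M" "?w (- 1) \<in> M" "?w (- 2) \<in> M"
    by (simp_all add: bimodule_mult[OF bimodule_M])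
  have "t1 * word [1, 2, 1] 2 = a * ?w 1 + b * ?w 0 + c * ?w (- 1) + d * ?w (- 2) + e * ?w (- 3)"
    using word_middle_recurrence[of 1 "- 3" 1 2] by (simp add: distrib_left scalar_swaps)
  then have "e * ?w (- 3) = s1 ^ 3 * omega ^ 3 - (a * ?w 1 + b * ?w 0 + c * ?w (- 1) + d * ?w (- 2))"
    by (simp add: omega_cube algebra_simps)
  then have "ei * (e * ?w (- 3)) = ei * (s1 ^ 3 * omega ^ 3) - ei * (a * ?w 1 + b * ?w 0 + c * ?w (- 1) + d * ?w (- 2))"
    by (simp add: right_diff_distrib)
  then have "?w (- 3) = ei * (s1 ^ 3 * omega ^ 3) - ei * (a * ?w 1 + b * ?w 0 + c * ?w (- 1) + d * ?w (- 2))"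
    by (simp add: mult.assoc[symmetric] ei_e)
  then have "s2 * s1 ^ 3 * s2 ^ 2 * s1 ^ 2 * s2 ^ 2 - ei * s1 ^ 3 * omega ^ 3
      = - (ei * (a * ?w 1 + b * ?w 0 + c * ?w (- 1) + d * ?w (- 2)))"
    unfolding element_word by (simp add: mult.assoc)
  also have "\<dots> \<in> M"
    using w_in by (simp add: submodule_uminus submodule_add submodule_scale submodule_M)
  finally show ?thesis .
qed

lemma peel_mprod_ualg:
  assumes v: "v \<in> mprod R X (ualg R s)" and gen: "\<And>x k. x \<in> X \<Longrightarrow> L * x * (s ^ k * Q) \<in> M"
  shows "L * v * Q \<in> M"
proof (rule mprod_sandwich[OF submodule_M _ v])
  fix x y assume x: "x \<in> X" and y: "y \<in> ualg R s"
  have "(L * x) * y * Q \<in> M"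
    by (rule ualg_sandwich[OF submodule_M _ y]) (use gen[OF x] in \<open>simp add: mult.assoc\<close>)
  then show "L * (x * y) * Q \<in> M" by (simp add: mult.assoc)
qed

lemma peel_mprod_singleton:
  assumes v: "v \<in> mprod R X {g}" and gen: "\<And>x. x \<in> X \<Longrightarrow> L * x * (g * Q) \<in> M"
  shows "L * v * Q \<in> M"
  by (rule mprod_sandwich[OF submodule_M _ v]) (use gen in \<open>simp add: mult.assoc\<close>)

lemma peel_ualg:
  assumes "p \<in> ualg R s" and "\<And>k. L * s ^ k * Q \<in> M"
  shows "L * p * Q \<in> M"
  by (rule ualg_sandwich[OF submodule_M assms(2) assms(1)])

lemma s1_powers_sandwich_mem: "g \<in> M \<Longrightarrow> 1 * s1 ^ i * (g * (s1 ^ m * 1)) \<in> M"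
  using bimodule_power(1,2)[OF bimodule_M] by (simp add: mult.assoc[symmetric])

lemma X1_subset:
  assumes "\<And>m. word [m] 2 \<in> M"
  shows "X1 \<subseteq> M"
proof
  fix v assume "v \<in> X1"
  have gen: "s2 * s1 ^ k * (s2 * s1 ^ 3 * s2) \<in> M" for k
    using X1_generator_word[of "int k"] assms[of "int k - 3"]
    by (simp add: bimodule_mult[OF bimodule_M] bimodule_power[OF bimodule_M])
  have "1 * v * 1 \<in> M"
    by (insert \<open>v \<in> X1\<close>, unfold X1_def,
        (rule peel_mprod_ualg peel_mprod_singleton, assumption)+, rule peel_ualg, assumption)
      (use s1_powers_sandwich_mem[OF gen] in \<open>simp add: mult.assoc\<close>)
  then show "v \<in> M" by simp
qed

lemma X2_subset:
  assumes "word [2, 2, - 3] 1 \<in> M"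
  shows "X2 \<subseteq> M"
proof
  fix v assume "v \<in> X2"
  have "s2 ^ 2 * s1 ^ 3 * s2 * t1 * s2 = word [2, 2, - 3] 1 * t1"
    by (simp add: X2_generator_word[symmetric] mult.assoc s1_t1)
  then have gen: "s2 ^ 2 * s1 ^ 3 * s2 * t1 * s2 \<in> M"
    using bimodule_mult(4)[OF bimodule_M assms] by simp
  have "1 * v * 1 \<in> M"
    by (insert \<open>v \<in> X2\<close>, unfold X2_def sandw_def,
        (rule peel_mprod_ualg peel_mprod_singleton, assumption)+, rule peel_ualg, assumption)
      (use s1_powers_sandwich_mem[OF gen] in \<open>simp add: mult.assoc\<close>)
  then show "v \<in> M" by simp
qed

lemma X3_subset:
  assumes "\<And>x y w. word [x, y, w] 0 \<in> M"
  shows "X3 \<subseteq> M"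
proof
  fix v assume "v \<in> X3"
  have gen: "s2 ^ j * s1 ^ k * s2 ^ l \<in> M" for j k l
    using assms[of "int j" "int k" "int l"] by (simp add: word_simps)
  have "1 * v * 1 \<in> M"
    by (insert \<open>v \<in> X3\<close>, unfold X3_def,
        (rule peel_mprod_ualg peel_mprod_singleton, assumption)+, rule peel_ualg, assumption)
      (use s1_powers_sandwich_mem[OF gen] in \<open>simp add: mult.assoc\<close>)
  then show "v \<in> M" by simp
qed

lemma summands_sum_subset:
  assumes "has_key_words M"
  shows "msums [X1, X2, X3] \<subseteq> M"
  using assms X1_subset X2_subset X3_subset
  by (intro msums_subset[OF submodule_M]) (auto simp: has_key_words_def)

end

context braid_quintic
begin

lemma summands_sum_bimodule: "bimodule s1 t1 (msums [X1, X2, X3])"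
  by (rule msums_bimodule) (use summands_bimodule in auto)

lemma summands_sum_key_words: "has_key_words (msums [X1, X2, X3])"
proof -
  let ?Y = "msums [X1, X2, X3]"
  note Y = summands_sum_bimodule
  have in_Y: "x \<in> ?Y" if "x \<in> N" "N \<in> {X1, X2, X3}" for x N
    by (rule msums_mem[of "[X1, X2, X3]" N]) (use summands_bimodule bimodule_submodule that in auto)
  have level0: "word [x, y, w] 0 \<in> ?Y" for x y w
  proof -
    have "1 * s2_pow x * s1_pow y * s2_pow w * 1 \<in> X3"
      unfolding X3_def by (intro mprod_mem one_in_ualg pow_in_ualg)
    then show ?thesis using in_Y by (simp add: word_simps)
  qed
  have level2: "word [m] 2 \<in> ?Y" for m
  proof -
    have "1 * s2 * s1_pow (m + 3) * (s2 * s1 ^ 3 * s2) * 1 \<in> X1"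
      unfolding X1_def by (intro mprod_mem one_in_ualg pow_in_ualg singletonI)
    then have "t1 * word [m] 2 * t1 ^ 2 \<in> ?Y"
      using in_Y[of _ X1] X1_generator_word[of "m + 3"] by simp
    then have "s1 * (t1 * word [m] 2 * t1 ^ 2) * s1 ^ 2 \<in> ?Y"
      by (intro bimodule_power(2)[OF Y] bimodule_mult(1)[OF Y])
    then show ?thesis by (simp add: mult.assoc power2_eq_square t1_s1)
  qed
  have "s2 ^ 2 * s1 ^ 3 * s2 * t1 * s2 \<in> ?Y"
    using in_Y[of _ X2] sandw_base unfolding X2_def by simp
  then have "s2 ^ 2 * s1 ^ 3 * s2 * t1 * s2 * s1 \<in> ?Y" by (rule bimodule_mult(2)[OF Y])
  then have top: "word [2, 2, - 3] 1 \<in> ?Y" by (simp only: X2_generator_word)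
  show ?thesis
    unfolding has_key_words_def using level0 level2 top by blast
qed

end

section \<open>The module \<open>U''\<close>\<close>

context braid_quintic
begin

definition omega_inv :: 'a where
  "omega_inv = t2 * t1 ^ 2 * t2"

lemma omega_omega_inv: "omega * omega_inv = 1" "omega_inv * omega = 1"
  by (simp_all add: omega_def omega_inv_def power2_eq_square mult.assoc s2_t2 t2_s2 s1_t1 t1_s1)

lemma omega_inv_commute: "omega_inv * s1 = s1 * omega_inv" "omega_inv * t1 = t1 * omega_inv"
  using inverse_commute[OF omega_omega_inv, of s1] inverse_commute[OF omega_omega_inv, of t1]
    omega_commute by simp_all

lemma z_via_omega: "z = s1 ^ 2 * omega" "zi = t1 ^ 2 * omega_inv" "z ^ 2 = s1 ^ 4 * omega ^ 2"
proof -
  show z: "z = s1 ^ 2 * omega"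
    by (simp add: omega_eq power2_eq_square mult.assoc)
  have "t1 ^ 2 * omega_inv * z = t1 ^ 2 * (omega_inv * s1 ^ 2) * omega"
    by (simp add: z mult.assoc)
  also have "\<dots> = t1 ^ 2 * (s1 ^ 2 * omega_inv) * omega"
    using power_commuting_commutes[OF omega_inv_commute(1)[symmetric], of 2] by simp
  also have "\<dots> = 1" by (simp add: omega_omega_inv power2_eq_square mult.assoc t1_s1)
  finally have "t1 ^ 2 * omega_inv * (z * zi) = zi" by (simp add: mult.assoc[symmetric])
  then show "zi = t1 ^ 2 * omega_inv" by (simp add: z_zi)
  have "z ^ 2 = s1 ^ 2 * (omega * s1 ^ 2) * omega"
    by (simp add: z power2_eq_square mult.assoc)
  also have "\<dots> = s1 ^ 2 * (s1 ^ 2 * omega) * omega"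
    using power_commuting_commutes[OF omega_commute(1)[symmetric], of 2] by simp
  finally show "z ^ 2 = s1 ^ 4 * omega ^ 2"
    by (simp add: power2_eq_square power4_eq_xxxx mult.assoc)
qed

lemma top_generator_word: "s2 ^ 2 * t1 ^ 2 * s2 * t1 * s2 * s1 = word [2, - 3, - 3] 1"
proof -
  have "s2 ^ 2 * t1 ^ 2 * s2 * t1 * s2 = s2 * (s2 * (t1 * (t1 * (s2 * (t1 * s2)))))"
    by (simp add: power2_eq_square mult.assoc)
  also have "\<dots> = s2 * (s2 * (t1 * (t1 * (s2 * (s2 * (s1 * (t2 * t1)))))))"
    by (simp only: t1_s2)
  also have "\<dots> = s2 * (s2 * (t1 * (t1 * (t1 * (s1 * (s2 * (s2 * (s1 * (t2 * t1)))))))))"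
    by simp
  also have "\<dots> = s2 ^ 2 * t1 ^ 3 * t2 ^ 3 * t1 * z"
    by (simp only: s1_s2_s2_s1) (simp add: z_push power2_eq_square power3_eq_cube mult.assoc)
  finally show ?thesis
    by (simp add: word_simps power2_eq_square power3_eq_cube mult.assoc z_push)
qed

definition Uprime_summands :: "'a set list" where
  "Uprime_summands =
    [mprod R (mprod R u1 u2) u1, mprod R u1 {omega}, mprod R u1 {omega_inv},
     sandw R u1 (t2 * s1 ^ 2 * t2), sandw R u1 (s2 * t1 ^ 2 * s2), sandw R u1 (s2 ^ 2 * s1 ^ 2 * s2 ^ 2),
     sandw R u1 (t2 ^ 2 * t1 ^ 2 * t2 ^ 2), sandw R u1 (s2 * t1 ^ 2 * s2 ^ 2), sandw R u1 (t2 * s1 ^ 2 * t2 ^ 2),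
     sandw R u1 (t2 * s1 * t2), sandw R u1 (s2 * t1 * s2), sandw R u1 (t2 ^ 2 * t1 ^ 2 * s2 ^ 2),
     sandw R u1 (s2 ^ 2 * s1 ^ 2 * t2 ^ 2), sandw R u1 (s2 ^ 2 * t1 ^ 2 * s2 ^ 2),
     sandw R u1 (t2 ^ 2 * s1 ^ 2 * t2 ^ 2), sandw R u1 (t2 ^ 2 * s1 * t2), sandw R u1 (t2 * s1 * t2 ^ 2)]"

definition Udprime_summands :: "'a set list" where
  "Udprime_summands =
    [Uprime R s1 s2 t1 t2, mprod R u1 {omega ^ 2}, mprod R u1 {omega_inv ^ 2},
     sandw R u1 (t2 ^ 2 * s1 ^ 2 * t2 * s1 * t2), sandw R u1 (s2 ^ 2 * t1 ^ 2 * s2 * t1 * s2),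
     sandw R u1 (s2 * t1 ^ 2 * s2 ^ 2 * t1 ^ 2 * s2 ^ 2), sandw R u1 (t2 * s1 ^ 2 * t2 ^ 2 * s1 ^ 2 * t2 ^ 2)]"

lemma Uprime_eq: "Uprime R s1 s2 t1 t2 = msums Uprime_summands"
  by (simp add: Uprime_def Uprime_summands_def Let_def omega_def omega_inv_def)

lemma Udprime_eq: "Udprime R s1 s2 t1 t2 = msums Udprime_summands"
  by (simp add: Udprime_def Udprime_summands_def Let_def omega_def omega_inv_def)

lemma sandw_bimodule: "bimodule s1 t1 (sandw R u1 g)"
  unfolding sandw_def by (intro bimodule_mprod left_stable_mprod bimodule_left_stable u1_bimodule)

lemma central_multiples_bimodule:
  "g * s1 = s1 * g \<Longrightarrow> g * t1 = t1 * g \<Longrightarrow> bimodule s1 t1 (mprod R u1 {g})"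
  by (rule bimodule_mprod_commuting[OF u1_bimodule])

lemma u1_u2_u1_bimodule: "bimodule s1 t1 (mprod R (mprod R u1 u2) u1)"
  by (intro bimodule_mprod left_stable_mprod bimodule_left_stable u1_bimodule)

lemma Uprime_summands_bimodule: "N \<in> set Uprime_summands \<Longrightarrow> bimodule s1 t1 N"
  unfolding Uprime_summands_def
  by (auto simp: sandw_bimodule central_multiples_bimodule u1_u2_u1_bimodule omega_commute omega_inv_commute)

lemma Uprime_bimodule: "bimodule s1 t1 (Uprime R s1 s2 t1 t2)"
  unfolding Uprime_eq by (intro msums_bimodule Uprime_summands_bimodule)

lemma Udprime_summands_bimodule: "N \<in> set Udprime_summands \<Longrightarrow> bimodule s1 t1 N"
proof -
  have "omega ^ 2 * s1 = s1 * omega ^ 2" "omega ^ 2 * t1 = t1 * omega ^ 2"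
    "omega_inv ^ 2 * s1 = s1 * omega_inv ^ 2" "omega_inv ^ 2 * t1 = t1 * omega_inv ^ 2"
    using power_commuting_commutes[OF omega_commute(1)] power_commuting_commutes[OF omega_commute(2)]
      power_commuting_commutes[OF omega_inv_commute(1)] power_commuting_commutes[OF omega_inv_commute(2)]
    by simp_all
  then show "N \<in> set Udprime_summands \<Longrightarrow> bimodule s1 t1 N"
    unfolding Udprime_summands_def
    by (auto simp: Uprime_bimodule sandw_bimodule central_multiples_bimodule)
qed

lemma Udprime_bimodule: "bimodule s1 t1 (Udprime R s1 s2 t1 t2)"
  unfolding Udprime_eq by (intro msums_bimodule Udprime_summands_bimodule)

lemma Udprime_mem:
  assumes "x \<in> N"
  shows "N \<in> set Udprime_summands \<Longrightarrow> x \<in> Udprime R s1 s2 t1 t2"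
    and "N \<in> set Uprime_summands \<Longrightarrow> x \<in> Udprime R s1 s2 t1 t2"
proof -
  have sub: "submodule K" if "K \<in> set Udprime_summands \<or> K \<in> set Uprime_summands" for K
    using that Udprime_summands_bimodule Uprime_summands_bimodule bimodule_submodule by blast
  show U'': "x \<in> Udprime R s1 s2 t1 t2" if "N \<in> set Udprime_summands"
    unfolding Udprime_eq by (rule msums_mem[OF _ that assms]) (use sub in blast)
  show "x \<in> Udprime R s1 s2 t1 t2" if "N \<in> set Uprime_summands"
  proof (rule msums_mem[of Udprime_summands "Uprime R s1 s2 t1 t2", folded Udprime_eq])
    show "x \<in> Uprime R s1 s2 t1 t2"
      unfolding Uprime_eq by (rule msums_mem[OF _ that assms]) (use sub in blast)
    show "\<And>K. K \<in> set Udprime_summands \<Longrightarrow> submodule K" using sub by blast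
  qed (simp add: Udprime_summands_def)
qed

lemma Udprime_generator_words: "generator_words a b c d e ei s1 s2 t1 t2 (Udprime R s1 s2 t1 t2)"
proof -
  let ?U = "Udprime R s1 s2 t1 t2"
  have "1 * s2_pow x * 1 \<in> mprod R (mprod R u1 u2) u1" for x
    by (intro mprod_mem one_in_ualg pow_in_ualg)
  then have singles: "word [x] 0 \<in> ?U" for x
    using Udprime_mem(2)[of _ "mprod R (mprod R u1 u2) u1"] by (simp add: Uprime_summands_def word_simps)
  have "s1_pow 2 * omega \<in> mprod R u1 {omega}" "s1_pow (- 2) * omega_inv \<in> mprod R u1 {omega_inv}"
    "s1_pow 4 * omega ^ 2 \<in> mprod R u1 {omega ^ 2}"
    by (intro mprod_mem pow_in_ualg singletonI)+
  then have "z \<in> ?U" "zi \<in> ?U" "z ^ 2 \<in> ?U"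
    using Udprime_mem(2)[of _ "mprod R u1 {omega}"] Udprime_mem(2)[of _ "mprod R u1 {omega_inv}"]
      Udprime_mem(1)[of _ "mprod R u1 {omega ^ 2}"]
    by (simp_all add: Uprime_summands_def Udprime_summands_def
        z_via_omega(1)[symmetric] z_via_omega(2)[symmetric] z_via_omega(3)[symmetric])
  then have powers: "word [] 0 \<in> ?U" "word [] 1 \<in> ?U" "word [] (- 1) \<in> ?U" "word [] 2 \<in> ?U"
    using singles[of 0] by (simp_all add: word_simps)
  have sandwiched: "g \<in> ?U" if "sandw R u1 g \<in> set Uprime_summands" for g
    using Udprime_mem(2)[OF sandw_base that] .
  have "s2 ^ 2 * t1 ^ 2 * s2 * t1 * s2 \<in> ?U"
    using Udprime_mem(1)[OF sandw_base] by (simp add: Udprime_summands_def)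
  then have "s2 ^ 2 * t1 ^ 2 * s2 * t1 * s2 * s1 \<in> ?U" by (rule bimodule_mult(2)[OF Udprime_bimodule])
  then have top: "word [2, - 3, - 3] 1 \<in> ?U" by (simp only: top_generator_word)
  show ?thesis
    by (intro generator_words.intro u1_bimodule.intro u1_bimodule_axioms.intro
        generator_words_axioms.intro braid_quintic_axioms Udprime_bimodule singles powers top)
      (use sandwiched in \<open>simp_all add: Uprime_summands_def word_simps power2_eq_square mult.assoc\<close>)
qed

end

context braid_quintic
begin

lemma unit_coefficient: "ei * s1 ^ 3 \<in> units_in u1"
proof -
  have "s1 ^ 3 * t1 ^ 3 = 1" "t1 ^ 3 * s1 ^ 3 = 1"
    using zpow_inverse[OF s1_t1 t1_s1, of 3] by simp_all
  moreover have "ei * s1 ^ 3 * (e * t1 ^ 3) = (ei * e) * (s1 ^ 3 * t1 ^ 3)"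
    "e * t1 ^ 3 * (ei * s1 ^ 3) = (e * ei) * (t1 ^ 3 * s1 ^ 3)"
    by (simp_all add: mult.assoc scalar_swap)
  ultimately have "ei * s1 ^ 3 * (e * t1 ^ 3) = 1" "e * t1 ^ 3 * (ei * s1 ^ 3) = 1"
    by (simp_all add: ei_e e_ei)
  moreover have "ei * s1 ^ 3 \<in> u1" "e * t1 ^ 3 \<in> u1"
    using zpow_in_ualg[OF s1_t1 t1_s1 quintic1, of "- 3"]
    by (auto intro: submodule_scale[OF ualg_submodule] ualg_power)
  ultimately show ?thesis
    unfolding units_in_def by blast
qed

lemma element_in_X: "s2 * s1 ^ 3 * s2 ^ 2 * s1 ^ 2 * s2 ^ 2 \<in> msums [X1, X2, X3, W]"
proof -
  interpret Y: u1_bimodule a b c d e ei s1 s2 t1 t2 "msums [X1, X2, X3]"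
    by (intro u1_bimodule.intro u1_bimodule_axioms.intro braid_quintic_axioms summands_sum_bimodule)
  obtain y1 y2 y3 where y: "y1 \<in> X1" "y2 \<in> X2" "y3 \<in> X3"
    and "s2 * s1 ^ 3 * s2 ^ 2 * s1 ^ 2 * s2 ^ 2 - ei * s1 ^ 3 * omega ^ 3 = y1 + (y2 + (y3 + 0))"
    using Y.element_decomposition[OF summands_sum_key_words] by auto
  then have "s2 * s1 ^ 3 * s2 ^ 2 * s1 ^ 2 * s2 ^ 2 = y1 + (y2 + (y3 + (ei * s1 ^ 3 * omega ^ 3 + 0)))"
    by (simp add: algebra_simps)
  moreover have "ei * s1 ^ 3 * omega ^ 3 \<in> W"
    unfolding W_def using unit_coefficient by blast
  ultimately show ?thesis
    using y by (simp only: msums_ConsI msums.simps(1) singletonI)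
qed

lemma X_subset: "msums [X1, X2, X3, W] \<subseteq> msums [W, Udprime R s1 s2 t1 t2]"
proof
  interpret U: generator_words a b c d e ei s1 s2 t1 t2 "Udprime R s1 s2 t1 t2"
    by (rule Udprime_generator_words)
  fix x assume "x \<in> msums [X1, X2, X3, W]"
  then obtain x1 x2 x3 w where x: "x = x1 + (x2 + (x3 + (w + 0)))" and w: "w \<in> W"
    and xs: "x1 \<in> X1" "x2 \<in> X2" "x3 \<in> X3"
    by auto
  have "x1 + (x2 + (x3 + 0)) \<in> msums [X1, X2, X3]"
    using xs by (intro msums_ConsI) simp_all
  then have "x1 + (x2 + (x3 + 0)) \<in> Udprime R s1 s2 t1 t2"
    using U.summands_sum_subset[OF U.has_key_words_M] by blast
  moreover have "x = w + ((x1 + (x2 + (x3 + 0))) + 0)"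
    using x by (simp add: algebra_simps)
  ultimately show "x \<in> msums [W, Udprime R s1 s2 t1 t2]"
    using w by (simp only: msums_ConsI msums.simps(1) singletonI)
qed

end

theorem lemma4p5:
  fixes a b c d e ei s1 s2 t1 t2 :: "'a::ring_1"
  assumes central: "\<And>x. a * x = x * a" "\<And>x. b * x = x * b" "\<And>x. c * x = x * c"
      "\<And>x. d * x = x * d" "\<And>x. e * x = x * e"
    and e_inv: "e * ei = 1" "ei * e = 1"
    and s1_inv: "s1 * t1 = 1" "t1 * s1 = 1"
    and s2_inv: "s2 * t2 = 1" "t2 * s2 = 1"
    and braid: "s1 * s2 * s1 = s2 * s1 * s2"
    and quintic1: "s1 ^ 5 = a * s1 ^ 4 + b * s1 ^ 3 + c * s1 ^ 2 + d * s1 + e"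
    and quintic2: "s2 ^ 5 = a * s2 ^ 4 + b * s2 ^ 3 + c * s2 ^ 2 + d * s2 + e"
  shows
    "(let R = scalars a b c d e ei; u1 = ualg R s1; u2 = ualg R s2;
          w = s2 * s1^2 * s2;
          W = {x * w ^ 3 | x. x \<in> units_in u1};
          X = msums [mprod R (mprod R (mprod R (mprod R u1 {s2}) u1) {s2 * s1^3 * s2}) u1,
                     sandw R u1 (s2^2 * s1^3 * s2 * t1 * s2),
                     mprod R (mprod R (mprod R (mprod R u1 u2) u1) u2) u1,
                     W]
      in s2 * s1^3 * s2^2 * s1^2 * s2^2 \<in> X \<and> X \<subseteq> msums [W, Udprime R s1 s2 t1 t2])"
proof -
  interpret braid_quintic a b c d e ei s1 s2 t1 t2
    by unfold_locales (fact central e_inv s1_inv s2_inv braid quintic1 quintic2)+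
  show ?thesis
    unfolding Let_def using element_in_X X_subset
    unfolding X1_def X2_def X3_def W_def omega_def by (rule conjI)
qed

end
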